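(* Let $n\in\mathbb{N}$ and let $f,g:\mathbb{R}^n\to\mathbb{R}$ be probability density functions. For $m\in\mathbb{N}$ let \[ \mathcal{M}^{g}_m=\left\{ h:\ h(\cdot)=\sum_{i=1}^{m}\frac{c_{i}}{\sigma_{i}^{n}}\,g\!\left(\frac{\cdot-\mu_{i}}{\sigma_{i}}\right),\ \mu_{i}\in\mathbb{R}^{n},\ \sigma_{i}\in(0,\infty),\ c_i\ge 0,\ \sum_{i=1}^m c_i=1\right\}, \qquad \mathcal{M}^g=\bigcup_{m\in\mathbb{N}}\mathcal{M}^g_m . \] Then: (a) If $f$ and $g$ are continuous and $\mathbb{K}\subset\mathbb{R}^n$ is compact, then there exists a sequence $\{h_m^g\}_{m=1}^\infty\subset\mathcal{M}^g$ with $h_m^g\in\mathcal{M}^g_m$ such that \[ \lim_{m\to\infty}\sup_{x\in\mathbb{K}}\left|f(x)-h_m^g(x)\right|=0 . \] (b) If $p\in[1,\infty)$, $f\in\mathcal{L}_p(\mathbb{R}^n)$ and $g\in\mathcal{L}_\infty(\mathbb{R}^n)$, then there exists a sequence $\{h_m^g\}_{m=1}^\infty\subset\mathcal{M}^g$ with $h_m^g\in\mathcal{M}^g_m$ such that \[ \lim_{m\to\infty}\left\Vert f-h_m^g\right\Vert_{\mathcal{L}_p(\mathbb{R}^n)}=0 . \]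
   Context: A probability density function (PDF) on $\mathbb{R}^n$ is a Lebesgue measurable function $f\ge 0$ with $\int f\,\mathrm{d}\lambda=1$, where $\lambda$ is Lebesgue measure. $\mathcal{L}_p(\mathbb{R}^n)$ denotes the usual Lebesgue space with norm $\|f\|_{\mathcal{L}_p}=(\int|f|^p\,\mathrm{d}\lambda)^{1/p}$ for $p<\infty$, and $\mathcal{L}_\infty$ is the space of essentially bounded measurable functions. Elements of $\mathcal{M}^g_m$ are called $m$-component location-scale finite mixtures of $g$. *)

theory Defs
  imports "HOL-Analysis.Analysis"
begin

text \<open>Probability density function on the Euclidean space 'a (= R^n, n = DIM('a)).\<close>
definition is_pdf :: "('a::euclidean_space \<Rightarrow> real) \<Rightarrow> bool" where
  "is_pdf f \<longleftrightarrow> f \<in> borel_measurable lebesgue \<and> (\<forall>x. 0 \<le> f x)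
     \<and> (\<integral>\<^sup>+ x. ennreal (f x) \<partial>lebesgue) = 1"

definition mixtures :: "('a::euclidean_space \<Rightarrow> real) \<Rightarrow> nat \<Rightarrow> ('a \<Rightarrow> real) set" where
  "mixtures g m = {h. \<exists>(c::nat \<Rightarrow> real) (\<mu>::nat \<Rightarrow> 'a) (\<sigma>::nat \<Rightarrow> real).
      (\<forall>i<m. 0 < \<sigma> i \<and> 0 \<le> c i) \<and> (\<Sum>i<m. c i) = 1 \<and>
      h = (\<lambda>x. \<Sum>i<m. c i / \<sigma> i ^ DIM('a) * g ((x - \<mu> i) /\<^sub>R \<sigma> i))}"

definition in_Lp :: "real \<Rightarrow> ('a::euclidean_space \<Rightarrow> real) \<Rightarrow> bool" where
  "in_Lp p f \<longleftrightarrow> f \<in> borel_measurable lebesgue \<and>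
     (\<integral>\<^sup>+ x. ennreal (\<bar>f x\<bar> powr p) \<partial>lebesgue) < \<infinity>"

definition in_Linf :: "('a::euclidean_space \<Rightarrow> real) \<Rightarrow> bool" where
  "in_Linf f \<longleftrightarrow> f \<in> borel_measurable lebesgue \<and>
     (\<exists>B. AE x in lebesgue. \<bar>f x\<bar> \<le> B)"

text \<open>p-th power of the L_p distance (the L_p norm tends to 0 iff this does).\<close>
definition Lp_dist_pow :: "real \<Rightarrow> ('a::euclidean_space \<Rightarrow> real) \<Rightarrow> ('a \<Rightarrow> real) \<Rightarrow> ennreal" where
  "Lp_dist_pow p f h = (\<integral>\<^sup>+ x. ennreal (\<bar>f x - h x\<bar> powr p) \<partial>lebesgue)"

end

(* A location-scale mixture of g is a Riemann sum for a convolution with a dilation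
   g_s(x) = g(x/s) / s^n of g. So cut f off to a bounded phi <= f of compact support, smooth it
   to phi * g_s, which is close to phi for small s since (g_s) is an approximate identity
   (uniformly on compact sets when f is continuous; in L_1 in general, by L_1-continuity of
   translation), and discretise the convolution integral on a grid of mesh d: the mixture
   sum_p (mass of phi on the cell of p) * g_s(x - p) tends to phi * g_s as d -> 0. The missing mass
   1 - int phi goes to one more component, either g itself (small in L_p since g is bounded and
   the weight is small) or a very wide dilation g_S (uniformly small on compact sets). In L_p all
   error terms are bounded functions, so L_1 estimates suffice. Components of weight 0 make this
   work for every large m, and picking nearly optimal mixtures for each m gives the sequence. *)
theory Submission
  imports Defs
begin

section \<open>Affine substitutions in Lebesgue integrals\<close>

lemma nn_integral_lborel_affine:
  fixes u :: "'a::euclidean_space \<Rightarrow> ennreal"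
  assumes u: "u \<in> borel_measurable borel" and c: "c \<noteq> 0"
  shows "(\<integral>\<^sup>+y. u y \<partial>lborel) = ennreal (\<bar>c\<bar>^DIM('a)) * (\<integral>\<^sup>+z. u (t + c *\<^sub>R z) \<partial>lborel)"
proof -
  have "(\<integral>\<^sup>+y. u y \<partial>lborel)
      = (\<integral>\<^sup>+y. u y \<partial>density (distr lborel borel (\<lambda>x. t + c *\<^sub>R x)) (\<lambda>_. \<bar>c\<bar>^DIM('a)))"
    by (subst lborel_affine[OF c]) (rule refl)
  also have "\<dots> = (\<integral>\<^sup>+y. ennreal (\<bar>c\<bar>^DIM('a)) * u y \<partial>distr lborel borel (\<lambda>x. t + c *\<^sub>R x))"
    using u by (subst nn_integral_density) auto
  also have "\<dots> = (\<integral>\<^sup>+z. ennreal (\<bar>c\<bar>^DIM('a)) * u (t + c *\<^sub>R z) \<partial>lborel)"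
    using u by (subst nn_integral_distr) auto
  also have "\<dots> = ennreal (\<bar>c\<bar>^DIM('a)) * (\<integral>\<^sup>+z. u (t + c *\<^sub>R z) \<partial>lborel)"
    using u by (subst nn_integral_cmult) auto
  finally show ?thesis .
qed

lemma nn_integral_lborel_translate:
  fixes u :: "'a::euclidean_space \<Rightarrow> ennreal"
  assumes "u \<in> borel_measurable borel"
  shows "(\<integral>\<^sup>+x. u (x + a) \<partial>lborel) = (\<integral>\<^sup>+z. u z \<partial>lborel)"
  using nn_integral_lborel_affine[OF assms, of 1 a] by (simp add: add.commute)

lemma nn_integral_lborel_reflect_scale:
  fixes u :: "'a::euclidean_space \<Rightarrow> ennreal"
  assumes u: "u \<in> borel_measurable borel" and s: "s > 0"
  shows "(\<integral>\<^sup>+y. u ((x - y) /\<^sub>R s) \<partial>lborel) = ennreal (s^DIM('a)) * (\<integral>\<^sup>+z. u z \<partial>lborel)"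
proof -
  have "(\<lambda>y. u ((x - y) /\<^sub>R s)) \<in> borel_measurable borel"
    using u by measurable
  from nn_integral_lborel_affine[OF this, of "-s" x] s show ?thesis
    by simp
qed

lemma nn_integral_lborel_shift_scale:
  fixes u :: "'a::euclidean_space \<Rightarrow> ennreal"
  assumes u: "u \<in> borel_measurable borel" and s: "s > 0"
  shows "(\<integral>\<^sup>+x. u ((x - a) /\<^sub>R s) \<partial>lborel) = ennreal (s^DIM('a)) * (\<integral>\<^sup>+z. u z \<partial>lborel)"
proof -
  have "(\<lambda>x. u ((x - a) /\<^sub>R s)) \<in> borel_measurable borel"
    using u by measurable
  from nn_integral_lborel_affine[OF this, of s a] s show ?thesis
    by simp
qed

lemma AE_lborel_affine:
  fixes P :: "'a::euclidean_space \<Rightarrow> bool"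
  assumes s: "s > 0" and ae: "AE y in lborel. P y"
  shows "AE x in lborel. P ((x - a) /\<^sub>R s)"
proof -
  obtain N where N: "{y \<in> space lborel. \<not> P y} \<subseteq> N" "emeasure lborel N = 0" "N \<in> sets lborel"
    using ae by (rule AE_E)
  have [measurable]: "N \<in> sets borel" using N(3) by simp
  let ?N = "{x. (x - a) /\<^sub>R s \<in> N}"
  have Nm: "?N \<in> sets borel" by measurable
  have "emeasure lborel ?N = (\<integral>\<^sup>+x. indicator ?N x \<partial>lborel)"
    using Nm by simp
  also have "\<dots> = (\<integral>\<^sup>+x. indicator N ((x - a) /\<^sub>R s) \<partial>lborel)"
    by (intro nn_integral_cong) (simp add: indicator_def)
  also have "\<dots> = 0"
    using N(2,3) by (subst nn_integral_lborel_shift_scale[OF _ s]) simp_all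
  finally show ?thesis
    by (intro AE_I[where N="?N"]) (use N(1) Nm in auto)
qed

section \<open>Continuity of translation in \<open>L\<^sub>1\<close>\<close>

lemma ennreal_tendsto_0I:
  fixes a :: "'b \<Rightarrow> ennreal"
  assumes "\<And>e. e > 0 \<Longrightarrow> eventually (\<lambda>k. a k < ennreal e) F"
  shows "(a \<longlongrightarrow> 0) F"
proof (rule order_tendstoI)
  fix y :: ennreal assume y: "0 < y"
  obtain e where e: "e > 0" "ennreal e \<le> y"
  proof (cases y rule: ennreal_cases)
    case (real r) then show ?thesis using y that[of r] by auto
  next
    case top then show ?thesis using that[of 1] by auto
  qed
  show "eventually (\<lambda>k. a k < y) F"
    using assms[OF e(1)] by eventually_elim (use e in auto)
qed simp

lemma ennreal_tendsto_0D:
  fixes a :: "'b \<Rightarrow> ennreal"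
  assumes "(a \<longlongrightarrow> 0) F" "e > 0"
  shows "eventually (\<lambda>k. a k < ennreal e) F"
  using order_tendstoD(2)[OF assms(1), of "ennreal e"] assms(2) by simp

definition L1_translation_continuous :: "('a::euclidean_space \<Rightarrow> real) \<Rightarrow> bool" where
  "L1_translation_continuous u \<longleftrightarrow> u \<in> borel_measurable borel \<and>
     (\<forall>X. X \<longlonglongrightarrow> 0 \<longrightarrow> (\<lambda>k. \<integral>\<^sup>+x. ennreal \<bar>u (x + X k) - u x\<bar> \<partial>lborel) \<longlonglongrightarrow> 0)"

lemma L1_translation_continuousD:
  "L1_translation_continuous u \<Longrightarrow> X \<longlonglongrightarrow> 0 \<Longrightarrow>
     (\<lambda>k. \<integral>\<^sup>+x. ennreal \<bar>u (x + X k) - u x\<bar> \<partial>lborel) \<longlonglongrightarrow> 0"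
  by (simp add: L1_translation_continuous_def)

lemma nn_integral_open_diff_translate_tendsto_0:
  fixes U :: "'a::euclidean_space set"
  assumes U: "open U" "emeasure lborel U < \<infinity>" and X: "X \<longlonglongrightarrow> 0"
  shows "(\<lambda>k. \<integral>\<^sup>+x. ennreal (indicator U x * (1 - indicator U (x + X k))) \<partial>lborel) \<longlonglongrightarrow> 0"
proof -
  have [measurable]: "U \<in> sets borel" using U by simp
  have "(\<lambda>k. \<integral>\<^sup>+x. ennreal (indicator U x * (1 - indicator U (x + X k))) \<partial>lborel)
      \<longlonglongrightarrow> (\<integral>\<^sup>+x. 0 \<partial>(lborel::'a measure))"
  proof (rule nn_integral_dominated_convergence[where w="indicator U"])
    show "(\<integral>\<^sup>+ x. indicator U x \<partial>lborel) < \<infinity>" using U by simp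
    show "AE x in lborel. ennreal (indicator U x * (1 - indicator U (x + X k))) \<le> indicator U x" for k
      by (auto simp: indicator_def)
    show "AE x in lborel. (\<lambda>k. ennreal (indicator U x * (1 - indicator U (x + X k)))) \<longlonglongrightarrow> 0"
    proof (rule AE_I2)
      fix x
      show "(\<lambda>k. ennreal (indicator U x * (1 - indicator U (x + X k)))) \<longlonglongrightarrow> 0"
      proof (cases "x \<in> U")
        case True
        have "(\<lambda>k. x + X k) \<longlonglongrightarrow> x + 0" by (intro tendsto_intros X)
        then have "eventually (\<lambda>k. x + X k \<in> U) sequentially"
          using True U(1) by (simp add: topological_tendstoD)
        then show ?thesis
          by (rule tendsto_eventually[OF eventually_mono]) (auto simp: indicator_def)
      qed (simp add: indicator_def)
    qed
  qed auto
  then show ?thesis by simp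
qed

text \<open>The symmetric difference of \<open>U\<close> and \<open>U - t\<close> splits into \<open>U - (U - t)\<close> and a
  translate of \<open>U - (U + t)\<close>; both parts vanish in measure as \<open>t \<rightarrow> 0\<close> because \<open>U\<close> is open.\<close>
lemma L1_translation_continuous_indicator_open:
  fixes U :: "'a::euclidean_space set"
  assumes U: "open U" "emeasure lborel U < \<infinity>"
  shows "L1_translation_continuous (indicator U)"
  unfolding L1_translation_continuous_def
proof (intro conjI allI impI)
  have [measurable]: "U \<in> sets borel" using U by simp
  show "indicator U \<in> borel_measurable borel" by simp
  fix X :: "nat \<Rightarrow> 'a" assume X: "X \<longlonglongrightarrow> 0"
  have eq: "(\<integral>\<^sup>+x. ennreal \<bar>indicator U (x + t) - indicator U x\<bar> \<partial>lborel)
      = (\<integral>\<^sup>+x. ennreal (indicator U x * (1 - indicator U (x + t))) \<partial>lborel)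
      + (\<integral>\<^sup>+x. ennreal (indicator U x * (1 - indicator U (x + - t))) \<partial>lborel)" for t :: 'a
  proof -
    have "(\<integral>\<^sup>+x. ennreal \<bar>indicator U (x + t) - indicator U x\<bar> \<partial>lborel)
      = (\<integral>\<^sup>+x. ennreal (indicator U x * (1 - indicator U (x + t)))
               + ennreal (indicator U (x + t) * (1 - indicator U x)) \<partial>lborel)"
      by (intro nn_integral_cong) (auto simp: indicator_def)
    also have "\<dots> = (\<integral>\<^sup>+x. ennreal (indicator U x * (1 - indicator U (x + t))) \<partial>lborel)
       + (\<integral>\<^sup>+x. ennreal (indicator U (x + t) * (1 - indicator U x)) \<partial>lborel)"
      by (rule nn_integral_add) auto
    also have "(\<integral>\<^sup>+x. ennreal (indicator U (x + t) * (1 - indicator U x)) \<partial>lborel)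
       = (\<integral>\<^sup>+x. ennreal (indicator U (x + - t + t) * (1 - indicator U (x + - t))) \<partial>lborel)"
      by (rule nn_integral_lborel_translate[symmetric]) simp
    finally show ?thesis
      by (simp add: mult.commute)
  qed
  have mX: "(\<lambda>k. - X k) \<longlonglongrightarrow> 0" using tendsto_minus[OF X] by simp
  show "(\<lambda>k. \<integral>\<^sup>+x. ennreal \<bar>indicator U (x + X k) - indicator U x\<bar> \<partial>lborel) \<longlonglongrightarrow> 0"
    unfolding eq using tendsto_add[OF nn_integral_open_diff_translate_tendsto_0[OF U X]
        nn_integral_open_diff_translate_tendsto_0[OF U mX]]
    by simp
qed

lemma L1_translation_continuous_indicator:
  fixes A :: "'a::euclidean_space set"
  assumes A: "A \<in> sets borel" "emeasure lborel A < \<infinity>"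
  shows "L1_translation_continuous (indicator A)"
  unfolding L1_translation_continuous_def
proof (intro conjI allI impI)
  show "indicator A \<in> borel_measurable borel" using A by simp
  fix X :: "nat \<Rightarrow> 'a" assume X: "X \<longlonglongrightarrow> 0"
  show "(\<lambda>k. \<integral>\<^sup>+x. ennreal \<bar>indicator A (x + X k) - indicator A x\<bar> \<partial>lborel) \<longlonglongrightarrow> 0"
  proof (rule ennreal_tendsto_0I)
    fix e :: real assume e: "e > 0"
    obtain U where U: "open U" "A \<subseteq> U" "emeasure lborel (U - A) < ennreal (e/3)"
      using outer_regular_lborel[OF A(1), of "e/3"] e by auto
    have [measurable]: "U \<in> sets borel" "A \<in> sets borel" using U A by auto
    have "emeasure lborel U \<le> emeasure lborel A + emeasure lborel (U - A)"
      using U(2) emeasure_subadditive[of A lborel "U - A"] by (simp add: Un_absorb1)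
    also have "\<dots> < \<infinity>"
      using A(2) U(3) ennreal_less_top order.strict_trans by (auto simp: less_top[symmetric])
    finally have Ufin: "emeasure lborel U < \<infinity>" .
    have e3: "e/3 > 0" using e by simp
    from ennreal_tendsto_0D[OF L1_translation_continuousD[OF
          L1_translation_continuous_indicator_open[OF U(1) Ufin] X] e3]
    show "eventually (\<lambda>k. (\<integral>\<^sup>+x. ennreal \<bar>indicator A (x + X k) - indicator A x\<bar> \<partial>lborel)
            < ennreal e) sequentially"
    proof eventually_elim
      case (elim k)
      let ?t = "X k"
      have "(\<integral>\<^sup>+x. ennreal \<bar>indicator A (x + ?t) - indicator A x\<bar> \<partial>lborel)
          \<le> (\<integral>\<^sup>+x. ennreal \<bar>indicator U (x + ?t) - indicator U x\<bar>
                 + (indicator (U - A) (x + ?t) + indicator (U - A) x) \<partial>lborel)"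
        by (intro nn_integral_mono) (use U(2) in \<open>auto simp: indicator_def\<close>)
      also have "\<dots> = (\<integral>\<^sup>+x. ennreal \<bar>indicator U (x + ?t) - indicator U x\<bar> \<partial>lborel)
           + ((\<integral>\<^sup>+x. indicator (U - A) (x + ?t) \<partial>lborel) + (\<integral>\<^sup>+x. indicator (U - A) x \<partial>lborel))"
        by (subst nn_integral_add, simp, simp, subst nn_integral_add) auto
      also have "(\<integral>\<^sup>+x. indicator (U - A) (x + ?t) \<partial>lborel) = emeasure lborel (U - A)"
        by (subst nn_integral_lborel_translate) auto
      also have "(\<integral>\<^sup>+x. indicator (U - A) x \<partial>lborel) = emeasure lborel (U - A)"
        by simp
      also have "(\<integral>\<^sup>+x. ennreal \<bar>indicator U (x + ?t) - indicator U x\<bar> \<partial>lborel)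
           + (emeasure lborel (U - A) + emeasure lborel (U - A)) < ennreal (e/3 + (e/3 + e/3))"
        by (intro add_mono_ennreal elim U(3))
      finally show ?case by simp
    qed
  qed
qed

lemma L1_translation_continuous_add:
  assumes u: "L1_translation_continuous u" and v: "L1_translation_continuous v"
  shows "L1_translation_continuous (\<lambda>x. u x + v x)"
  unfolding L1_translation_continuous_def
proof (intro conjI allI impI)
  have [measurable]: "u \<in> borel_measurable borel" "v \<in> borel_measurable borel"
    using u v by (auto simp: L1_translation_continuous_def)
  show "(\<lambda>x. u x + v x) \<in> borel_measurable borel" by simp
  fix X :: "nat \<Rightarrow> 'a" assume X: "X \<longlonglongrightarrow> 0"
  have le: "(\<integral>\<^sup>+x. ennreal \<bar>u (x + X k) + v (x + X k) - (u x + v x)\<bar> \<partial>lborel)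
      \<le> (\<integral>\<^sup>+x. ennreal \<bar>u (x + X k) - u x\<bar> \<partial>lborel)
         + (\<integral>\<^sup>+x. ennreal \<bar>v (x + X k) - v x\<bar> \<partial>lborel)" for k
  proof -
    have "(\<integral>\<^sup>+x. ennreal \<bar>u (x + X k) + v (x + X k) - (u x + v x)\<bar> \<partial>lborel)
       \<le> (\<integral>\<^sup>+x. ennreal \<bar>u (x + X k) - u x\<bar> + ennreal \<bar>v (x + X k) - v x\<bar> \<partial>lborel)"
      by (intro nn_integral_mono) (simp add: ennreal_plus[symmetric] del: ennreal_plus)
    also have "\<dots> = (\<integral>\<^sup>+x. ennreal \<bar>u (x + X k) - u x\<bar> \<partial>lborel)
                   + (\<integral>\<^sup>+x. ennreal \<bar>v (x + X k) - v x\<bar> \<partial>lborel)"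
      by (rule nn_integral_add) auto
    finally show ?thesis .
  qed
  show "(\<lambda>k. \<integral>\<^sup>+x. ennreal \<bar>u (x + X k) + v (x + X k) - (u x + v x)\<bar> \<partial>lborel) \<longlonglongrightarrow> 0"
    using tendsto_add[OF L1_translation_continuousD[OF u X] L1_translation_continuousD[OF v X]]
    by (intro tendsto_sandwich[of "\<lambda>_. 0" _ sequentially, OF _ always_eventually[OF allI[OF le]]]) simp_all
qed

lemma L1_translation_continuous_cmult:
  assumes u: "L1_translation_continuous u"
  shows "L1_translation_continuous (\<lambda>x. c * u x)"
  unfolding L1_translation_continuous_def
proof (intro conjI allI impI)
  have [measurable]: "u \<in> borel_measurable borel"
    using u by (auto simp: L1_translation_continuous_def)
  show "(\<lambda>x. c * u x) \<in> borel_measurable borel" by simp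
  fix X :: "nat \<Rightarrow> 'a" assume X: "X \<longlonglongrightarrow> 0"
  have eq: "(\<integral>\<^sup>+x. ennreal \<bar>c * u (x + X k) - c * u x\<bar> \<partial>lborel)
      = ennreal \<bar>c\<bar> * (\<integral>\<^sup>+x. ennreal \<bar>u (x + X k) - u x\<bar> \<partial>lborel)" for k
    by (subst nn_integral_cmult[symmetric]) (auto intro!: nn_integral_cong
        simp: ennreal_mult[symmetric] abs_mult right_diff_distrib[symmetric])
  show "(\<lambda>k. \<integral>\<^sup>+x. ennreal \<bar>c * u (x + X k) - c * u x\<bar> \<partial>lborel) \<longlonglongrightarrow> 0"
    unfolding eq using ennreal_tendsto_cmult[OF _ L1_translation_continuousD[OF u X]] by simp
qed

lemma L1_translation_continuous_sum:
  assumes "finite I" "\<And>i. i \<in> I \<Longrightarrow> L1_translation_continuous (u i)"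
  shows "L1_translation_continuous (\<lambda>x. \<Sum>i\<in>I. u i x)"
  using assms
proof (induction I rule: finite_induct)
  case empty then show ?case by (simp add: L1_translation_continuous_def)
next
  case (insert i I)
  then have "L1_translation_continuous (\<lambda>x. u i x + (\<Sum>i\<in>I. u i x))"
    by (intro L1_translation_continuous_add) auto
  then show ?case using insert by simp
qed

lemma L1_translation_continuous_simple:
  fixes s :: "'a::euclidean_space \<Rightarrow> real"
  assumes "Bochner_Integration.simple_bochner_integrable lborel s"
  shows "L1_translation_continuous s"
proof -
  from assms have sf: "simple_function lborel s"
    and fin: "emeasure lborel {y \<in> space lborel. s y \<noteq> 0} \<noteq> \<infinity>"
    by (auto elim: Bochner_Integration.simple_bochner_integrable.cases)
  have [measurable]: "s \<in> borel_measurable borel"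
    using borel_measurable_simple_function[OF sf] by simp
  let ?V = "s ` space lborel - {0}"
  have finV: "finite ?V" using sf by (auto simp: simple_function_def)
  have "L1_translation_continuous (\<lambda>x. \<Sum>v\<in>?V. v * indicator (s -` {v}) x)"
  proof (rule L1_translation_continuous_sum[OF finV])
    fix v assume v: "v \<in> ?V"
    have meas: "s -` {v} \<in> sets borel"
      using simple_functionD(2)[OF sf, of "{v}"] by simp
    have "emeasure lborel (s -` {v}) \<le> emeasure lborel {y \<in> space lborel. s y \<noteq> 0}"
      using v by (intro emeasure_mono) auto
    then have "emeasure lborel (s -` {v}) < \<infinity>" using fin by (simp add: le_less_trans less_top)
    then show "L1_translation_continuous (\<lambda>x. v * indicator (s -` {v}) x)"
      by (intro L1_translation_continuous_cmult L1_translation_continuous_indicator meas)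
  qed
  moreover have "(\<lambda>x. \<Sum>v\<in>?V. v * indicator (s -` {v}) x) = s"
  proof
    fix x
    have "(\<Sum>v\<in>?V. v * indicator (s -` {v}) x) = (\<Sum>v\<in>?V. if s x = v then v else 0)"
      by (intro sum.cong) (auto simp: indicator_def)
    then show "(\<Sum>v\<in>?V. v * indicator (s -` {v}) x) = s x"
      using finV by (simp add: sum.delta)
  qed
  ultimately show ?thesis by simp
qed

text \<open>Simple functions are dense in \<open>L\<^sub>1\<close>, and translation preserves the \<open>L\<^sub>1\<close> distance.\<close>
lemma integrable_imp_L1_translation_continuous:
  fixes u :: "'a::euclidean_space \<Rightarrow> real"
  assumes "integrable lborel u"
  shows "L1_translation_continuous u"
proof -
  obtain s where s: "\<And>i. Bochner_Integration.simple_bochner_integrable lborel (s i)"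
    and lim: "(\<lambda>i. \<integral>\<^sup>+x. norm (u x - s i x) \<partial>lborel) \<longlonglongrightarrow> 0"
    using assms unfolding integrable.simps has_bochner_integral.simps by blast
  have [measurable]: "u \<in> borel_measurable borel" using assms by (simp add: borel_measurable_integrable)
  have ts: "L1_translation_continuous (s i)" for i by (rule L1_translation_continuous_simple[OF s])
  have [measurable]: "s i \<in> borel_measurable borel" for i
    using ts by (simp add: L1_translation_continuous_def)
  show ?thesis unfolding L1_translation_continuous_def
  proof (intro conjI allI impI)
    show "u \<in> borel_measurable borel" by simp
    fix X :: "nat \<Rightarrow> 'a" assume X: "X \<longlonglongrightarrow> 0"
    show "(\<lambda>k. \<integral>\<^sup>+x. ennreal \<bar>u (x + X k) - u x\<bar> \<partial>lborel) \<longlonglongrightarrow> 0"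
    proof (rule ennreal_tendsto_0I)
      fix e :: real assume e: "e > 0"
      have e3: "e/3 > 0" using e by simp
      from ennreal_tendsto_0D[OF lim e3]
      obtain i where i: "(\<integral>\<^sup>+x. ennreal \<bar>u x - s i x\<bar> \<partial>lborel) < ennreal (e/3)"
        by (auto simp: eventually_sequentially)
      from ennreal_tendsto_0D[OF L1_translation_continuousD[OF ts[of i] X] e3]
      show "eventually (\<lambda>k. (\<integral>\<^sup>+x. ennreal \<bar>u (x + X k) - u x\<bar> \<partial>lborel) < ennreal e) sequentially"
      proof eventually_elim
        case (elim k)
        let ?t = "X k"
        have "(\<integral>\<^sup>+x. ennreal \<bar>u (x + ?t) - u x\<bar> \<partial>lborel)
           \<le> (\<integral>\<^sup>+x. ennreal \<bar>s i (x + ?t) - s i x\<bar>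
                 + (ennreal \<bar>u (x + ?t) - s i (x + ?t)\<bar> + ennreal \<bar>u x - s i x\<bar>) \<partial>lborel)"
          by (intro nn_integral_mono) (simp add: ennreal_plus[symmetric] del: ennreal_plus)
        also have "\<dots> = (\<integral>\<^sup>+x. ennreal \<bar>s i (x + ?t) - s i x\<bar> \<partial>lborel)
           + ((\<integral>\<^sup>+x. ennreal \<bar>u (x + ?t) - s i (x + ?t)\<bar> \<partial>lborel)
              + (\<integral>\<^sup>+x. ennreal \<bar>u x - s i x\<bar> \<partial>lborel))"
          by (subst nn_integral_add, simp, simp, subst nn_integral_add) auto
        also have "(\<integral>\<^sup>+x. ennreal \<bar>u (x + ?t) - s i (x + ?t)\<bar> \<partial>lborel)
            = (\<integral>\<^sup>+x. ennreal \<bar>u x - s i x\<bar> \<partial>lborel)"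
          by (rule nn_integral_lborel_translate[where u="\<lambda>x. ennreal \<bar>u x - s i x\<bar>"]) simp
        also have "(\<integral>\<^sup>+x. ennreal \<bar>s i (x + ?t) - s i x\<bar> \<partial>lborel)
            + ((\<integral>\<^sup>+x. ennreal \<bar>u x - s i x\<bar> \<partial>lborel) + (\<integral>\<^sup>+x. ennreal \<bar>u x - s i x\<bar> \<partial>lborel))
           < ennreal (e/3 + (e/3 + e/3))"
          by (intro add_mono_ennreal elim i)
        finally show ?case by simp
      qed
    qed
  qed
qed

lemma L1_translation_continuous_uniform:
  fixes u :: "'a::euclidean_space \<Rightarrow> real"
  assumes "L1_translation_continuous u" "e > 0"
  obtains \<delta> where "\<delta> > 0"
    "\<And>t. norm t < \<delta> \<Longrightarrow> (\<integral>\<^sup>+x. ennreal \<bar>u (x + t) - u x\<bar> \<partial>lborel) < ennreal e"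
proof -
  have "\<exists>\<delta>>0. \<forall>t. norm t < \<delta> \<longrightarrow> (\<integral>\<^sup>+x. ennreal \<bar>u (x + t) - u x\<bar> \<partial>lborel) < ennreal e"
  proof (rule ccontr)
    assume "\<not> ?thesis"
    then have "\<forall>k::nat. \<exists>t. norm t < 1 / Suc k \<and>
        \<not> (\<integral>\<^sup>+x. ennreal \<bar>u (x + t) - u x\<bar> \<partial>lborel) < ennreal e"
      by (metis of_nat_0_less_iff zero_less_Suc zero_less_divide_1_iff)
    then obtain X where X: "\<And>k. norm (X k) < 1 / Suc k"
      and Xe: "\<And>k. \<not> (\<integral>\<^sup>+x. ennreal \<bar>u (x + X k) - u x\<bar> \<partial>lborel) < ennreal e"
      by metis
    have "X \<longlonglongrightarrow> 0"
      by (rule tendsto_norm_zero_cancel, rule tendsto_sandwich[OF _ _ tendsto_const LIMSEQ_inverse_real_of_nat])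
        (use X in \<open>auto simp: inverse_eq_divide less_imp_le\<close>)
    from ennreal_tendsto_0D[OF L1_translation_continuousD[OF assms(1) this] assms(2)] Xe
    show False by auto
  qed
  then show ?thesis using that by blast
qed

section \<open>Dilations and convolution\<close>

definition dilation :: "('a::euclidean_space \<Rightarrow> real) \<Rightarrow> real \<Rightarrow> 'a \<Rightarrow> real" where
  "dilation g s z = g (z /\<^sub>R s) / s ^ DIM('a)"

definition conv :: "('a::euclidean_space \<Rightarrow> real) \<Rightarrow> ('a \<Rightarrow> real) \<Rightarrow> 'a \<Rightarrow> real" where
  "conv \<phi> k x = (\<integral>y. \<phi> y * k (x - y) \<partial>lborel)"

lemma measurable_dilation[measurable (raw)]:
  assumes [measurable]: "g \<in> borel_measurable borel" "f \<in> borel_measurable M"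
  shows "(\<lambda>x. dilation g s (f x)) \<in> borel_measurable M"
  unfolding dilation_def by measurable

lemma measurable_conv[measurable]:
  assumes [measurable]: "k \<in> borel_measurable borel" "\<phi> \<in> borel_measurable borel"
  shows "conv \<phi> k \<in> borel_measurable borel"
proof -
  have "(\<lambda>x. \<integral>y. \<phi> y * k (x - y) \<partial>lborel) \<in> borel_measurable (lborel::'a measure)"
    by (rule lborel.borel_measurable_lebesgue_integral) measurable
  then show ?thesis by (simp add: conv_def[abs_def])
qed

lemma dilation_nonneg: "(\<And>z. g z \<ge> 0) \<Longrightarrow> s > 0 \<Longrightarrow> dilation g s z \<ge> 0"
  unfolding dilation_def by simp

lemma nn_integral_dilation_reflect:
  fixes g :: "'a::euclidean_space \<Rightarrow> real"
  assumes [measurable]: "g \<in> borel_measurable borel" and g0: "\<And>z. g z \<ge> 0" and s: "s > 0"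
  shows "(\<integral>\<^sup>+y. ennreal (dilation g s (x - y)) \<partial>lborel) = (\<integral>\<^sup>+z. ennreal (g z) \<partial>lborel)"
proof -
  have "(\<integral>\<^sup>+y. ennreal (dilation g s (x - y)) \<partial>lborel)
      = (\<integral>\<^sup>+y. ennreal (1 / s ^ DIM('a)) * ennreal (g ((x - y) /\<^sub>R s)) \<partial>lborel)"
    by (intro nn_integral_cong) (use s in \<open>simp add: dilation_def ennreal_mult[symmetric] g0\<close>)
  also have "\<dots> = ennreal (1 / s ^ DIM('a)) * (\<integral>\<^sup>+y. ennreal (g ((x - y) /\<^sub>R s)) \<partial>lborel)"
    by (rule nn_integral_cmult) simp
  also have "(\<integral>\<^sup>+y. ennreal (g ((x - y) /\<^sub>R s)) \<partial>lborel) = ennreal (s ^ DIM('a)) * (\<integral>\<^sup>+z. ennreal (g z) \<partial>lborel)"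
    by (rule nn_integral_lborel_reflect_scale[OF _ s]) simp
  also have "ennreal (1 / s ^ DIM('a)) * (ennreal (s ^ DIM('a)) * (\<integral>\<^sup>+z. ennreal (g z) \<partial>lborel))
      = (\<integral>\<^sup>+z. ennreal (g z) \<partial>lborel)"
    using s by (simp add: mult.assoc[symmetric] ennreal_mult[symmetric])
  finally show ?thesis .
qed

lemma
  fixes g :: "'a::euclidean_space \<Rightarrow> real"
  assumes [measurable]: "g \<in> borel_measurable borel" and g0: "\<And>z. g z \<ge> 0"
    and g1: "(\<integral>\<^sup>+z. ennreal (g z) \<partial>lborel) = 1" and s: "s > 0"
  shows integrable_dilation: "integrable lborel (\<lambda>y. dilation g s (x - y))"
    and integral_dilation: "(\<integral>y. dilation g s (x - y) \<partial>lborel) = 1"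
proof -
  have nn: "(\<integral>\<^sup>+y. ennreal (dilation g s (x - y)) \<partial>lborel) = 1"
    using nn_integral_dilation_reflect[OF assms(1) g0 s] g1 by simp
  then show int: "integrable lborel (\<lambda>y. dilation g s (x - y))"
    using dilation_nonneg[of g, OF g0 s] by (intro integrableI_nonneg) auto
  from nn show "(\<integral>y. dilation g s (x - y) \<partial>lborel) = 1"
    by (subst (asm) nn_integral_eq_integral[OF int])
       (use dilation_nonneg[of g, OF g0 s] integral_nonneg_AE in \<open>auto simp: ennreal_eq_1\<close>)
qed

lemma integrable_bounded_mult_dilation:
  fixes g \<phi> :: "'a::euclidean_space \<Rightarrow> real"
  assumes [measurable]: "g \<in> borel_measurable borel" "\<phi> \<in> borel_measurable borel"
    and g0: "\<And>z. g z \<ge> 0" and gi: "(\<integral>\<^sup>+z. ennreal (g z) \<partial>lborel) < \<infinity>" and s: "s > 0"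
    and \<phi>M: "\<And>y. \<bar>\<phi> y\<bar> \<le> M"
  shows "integrable lborel (\<lambda>y. \<phi> y * dilation g s (x - y))"
proof (rule integrableI_bounded)
  have M0: "M \<ge> 0" using \<phi>M[of x] by simp
  have "(\<integral>\<^sup>+y. ennreal (norm (\<phi> y * dilation g s (x - y))) \<partial>lborel)
      \<le> (\<integral>\<^sup>+y. ennreal M * ennreal (dilation g s (x - y)) \<partial>lborel)"
    using M0 \<phi>M dilation_nonneg[of g, OF g0 s]
    by (intro nn_integral_mono)
       (auto simp: ennreal_mult[symmetric] abs_mult intro!: ennreal_leI mult_right_mono)
  also have "\<dots> = ennreal M * (\<integral>\<^sup>+z. ennreal (g z) \<partial>lborel)"
    by (simp add: nn_integral_cmult nn_integral_dilation_reflect[OF assms(1) g0 s])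
  also have "\<dots> < \<infinity>" using gi by (simp add: ennreal_mult_less_top less_top)
  finally show "(\<integral>\<^sup>+y. ennreal (norm (\<phi> y * dilation g s (x - y))) \<partial>lborel) < \<infinity>" .
qed simp

lemma nn_integral_dilation_diff:
  fixes g :: "'a::euclidean_space \<Rightarrow> real"
  assumes [measurable]: "g \<in> borel_measurable borel" and s: "s > 0"
  shows "(\<integral>\<^sup>+x. ennreal \<bar>dilation g s (x - a) - dilation g s (x - y)\<bar> \<partial>lborel)
       = (\<integral>\<^sup>+w. ennreal \<bar>g (w + (y - a) /\<^sub>R s) - g w\<bar> \<partial>lborel)"
proof -
  have "(\<integral>\<^sup>+x. ennreal \<bar>dilation g s (x - a) - dilation g s (x - y)\<bar> \<partial>lborel)
     = ennreal (\<bar>s\<bar>^DIM('a)) * (\<integral>\<^sup>+w. ennreal \<bar>dilation g s (y + s *\<^sub>R w - a)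
                                        - dilation g s (y + s *\<^sub>R w - y)\<bar> \<partial>lborel)"
    by (rule nn_integral_lborel_affine) (use s in auto)
  also have "(\<lambda>w. ennreal \<bar>dilation g s (y + s *\<^sub>R w - a) - dilation g s (y + s *\<^sub>R w - y)\<bar>)
       = (\<lambda>w. ennreal (1 / s^DIM('a)) * ennreal \<bar>g (w + (y - a) /\<^sub>R s) - g w\<bar>)"
  proof
    fix w
    have "(y + s *\<^sub>R w - a) /\<^sub>R s = w + (y - a) /\<^sub>R s" using s by (simp add: algebra_simps)
    then show "ennreal \<bar>dilation g s (y + s *\<^sub>R w - a) - dilation g s (y + s *\<^sub>R w - y)\<bar>
        = ennreal (1 / s^DIM('a)) * ennreal \<bar>g (w + (y - a) /\<^sub>R s) - g w\<bar>"
      using s by (simp add: dilation_def abs_divide diff_divide_distrib[symmetric] ennreal_mult[symmetric])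
  qed
  also have "ennreal (\<bar>s\<bar>^DIM('a)) * (\<integral>\<^sup>+w. ennreal (1 / s^DIM('a)) * ennreal \<bar>g (w + (y - a) /\<^sub>R s) - g w\<bar> \<partial>lborel)
       = (\<integral>\<^sup>+w. ennreal \<bar>g (w + (y - a) /\<^sub>R s) - g w\<bar> \<partial>lborel)"
    using s by (subst nn_integral_cmult) (auto simp: mult.assoc[symmetric] ennreal_mult[symmetric])
  finally show ?thesis .
qed

lemma abs_conv_dilation_minus_le:
  fixes g \<phi> :: "'a::euclidean_space \<Rightarrow> real"
  assumes [measurable]: "g \<in> borel_measurable borel" "\<phi> \<in> borel_measurable borel"
    and g0: "\<And>z. g z \<ge> 0" and g1: "(\<integral>\<^sup>+z. ennreal (g z) \<partial>lborel) = 1" and s: "s > 0"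
    and \<phi>M: "\<And>y. \<bar>\<phi> y\<bar> \<le> M"
  shows "ennreal \<bar>conv \<phi> (dilation g s) x - c\<bar>
           \<le> (\<integral>\<^sup>+z. ennreal (\<bar>\<phi> (x - s *\<^sub>R z) - c\<bar> * g z) \<partial>lborel)"
proof -
  let ?G = "dilation g s"
  have i1: "integrable lborel (\<lambda>y. \<phi> y * ?G (x - y))"
    using g1 by (intro integrable_bounded_mult_dilation[OF _ _ g0 _ s \<phi>M]) simp_all
  have i2: "integrable lborel (\<lambda>y. c * ?G (x - y))"
    using integrable_dilation[OF _ g0 g1 s] by simp
  have i: "integrable lborel (\<lambda>y. (\<phi> y - c) * ?G (x - y))"
    using Bochner_Integration.integrable_diff[OF i1 i2] by (simp add: left_diff_distrib)
  have "conv \<phi> ?G x - c = (\<integral>y. (\<phi> y - c) * ?G (x - y) \<partial>lborel)"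
    using integral_dilation[OF _ g0 g1 s] i1 i2 by (simp add: conv_def left_diff_distrib)
  then have "ennreal \<bar>conv \<phi> ?G x - c\<bar> \<le> (\<integral>\<^sup>+y. ennreal (\<bar>\<phi> y - c\<bar> * ?G (x - y)) \<partial>lborel)"
    using integral_norm_bound_ennreal[OF i] by (simp add: abs_mult dilation_nonneg[of g, OF g0 s])
  also have "\<dots> = ennreal (\<bar>-s\<bar>^DIM('a))
      * (\<integral>\<^sup>+z. ennreal (\<bar>\<phi> (x + (-s) *\<^sub>R z) - c\<bar> * ?G (x - (x + (-s) *\<^sub>R z))) \<partial>lborel)"
    by (rule nn_integral_lborel_affine) (use s in auto)
  also have "\<dots> = (\<integral>\<^sup>+z. ennreal (\<bar>\<phi> (x - s *\<^sub>R z) - c\<bar> * g z) \<partial>lborel)"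
    using s g0
    by (subst nn_integral_cmult[symmetric])
       (auto intro!: nn_integral_cong simp: dilation_def ennreal_mult[symmetric])
  finally show ?thesis .
qed

lemma nn_integral_tail_small:
  fixes g :: "'a::euclidean_space \<Rightarrow> real"
  assumes [measurable]: "g \<in> borel_measurable borel"
    and gi: "(\<integral>\<^sup>+z. ennreal (g z) \<partial>lborel) < \<infinity>" and e: "e > 0"
  obtains T where "T \<ge> 0" "(\<integral>\<^sup>+z. ennreal (g z) * indicator {z. norm z > T} z \<partial>lborel) < ennreal e"
proof -
  have "(\<lambda>k::nat. \<integral>\<^sup>+z. ennreal (g z) * indicator {z. norm z > real k} z \<partial>lborel)
      \<longlonglongrightarrow> (\<integral>\<^sup>+z. 0 \<partial>(lborel::'a measure))"
  proof (rule nn_integral_dominated_convergence[where w="\<lambda>z. ennreal (g z)"])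
    show "AE z in lborel. (\<lambda>k. ennreal (g z) * indicator {z. norm z > real k} z) \<longlonglongrightarrow> 0"
    proof (rule AE_I2)
      fix z :: 'a
      obtain N :: nat where "norm z < N" using reals_Archimedean2 by blast
      then have "eventually (\<lambda>k. ennreal (g z) * indicator {z. norm z > real k} z = 0) sequentially"
        unfolding eventually_sequentially by (intro exI[of _ N]) (auto simp: indicator_def)
      then show "(\<lambda>k. ennreal (g z) * indicator {z. norm z > real k} z) \<longlonglongrightarrow> 0"
        by (rule tendsto_eventually)
    qed
  qed (use gi in \<open>auto simp: indicator_def\<close>)
  from ennreal_tendsto_0D[OF this[simplified] e] obtain k :: nat where
    "(\<integral>\<^sup>+z. ennreal (g z) * indicator {z. norm z > real k} z \<partial>lborel) < ennreal e"
    by (auto simp: eventually_sequentially)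
  then show ?thesis using that[of "real k"] by simp
qed

lemma nn_integral_translate_diff_le:
  fixes u :: "'a::euclidean_space \<Rightarrow> real"
  assumes [measurable]: "u \<in> borel_measurable borel"
  shows "(\<integral>\<^sup>+x. ennreal \<bar>u (x + t) - u x\<bar> \<partial>lborel) \<le> 2 * (\<integral>\<^sup>+x. ennreal \<bar>u x\<bar> \<partial>lborel)"
proof -
  have "(\<integral>\<^sup>+x. ennreal \<bar>u (x + t) - u x\<bar> \<partial>lborel) \<le> (\<integral>\<^sup>+x. ennreal \<bar>u (x + t)\<bar> + ennreal \<bar>u x\<bar> \<partial>lborel)"
    by (intro nn_integral_mono) (simp add: ennreal_plus[symmetric] del: ennreal_plus)
  also have "\<dots> = (\<integral>\<^sup>+x. ennreal \<bar>u (x + t)\<bar> \<partial>lborel) + (\<integral>\<^sup>+x. ennreal \<bar>u x\<bar> \<partial>lborel)"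
    by (rule nn_integral_add) auto
  also have "(\<integral>\<^sup>+x. ennreal \<bar>u (x + t)\<bar> \<partial>lborel) = (\<integral>\<^sup>+x. ennreal \<bar>u x\<bar> \<partial>lborel)"
    by (rule nn_integral_lborel_translate[where u="\<lambda>x. ennreal \<bar>u x\<bar>"]) simp
  finally show ?thesis by (simp add: mult_2)
qed

lemma nn_integral_conv_dilation_diff_le:
  fixes g \<phi> :: "'a::euclidean_space \<Rightarrow> real"
  assumes [measurable]: "g \<in> borel_measurable borel" "\<phi> \<in> borel_measurable borel"
    and g0: "\<And>z. g z \<ge> 0" and g1: "(\<integral>\<^sup>+z. ennreal (g z) \<partial>lborel) = 1" and s: "s > 0"
    and \<phi>M: "\<And>y. \<bar>\<phi> y\<bar> \<le> M"
  shows "(\<integral>\<^sup>+x. ennreal \<bar>conv \<phi> (dilation g s) x - \<phi> x\<bar> \<partial>lborel)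
      \<le> (\<integral>\<^sup>+z. ennreal (g z) * (\<integral>\<^sup>+x. ennreal \<bar>\<phi> (x + - (s *\<^sub>R z)) - \<phi> x\<bar> \<partial>lborel) \<partial>lborel)"
proof -
  have "(\<integral>\<^sup>+x. ennreal \<bar>conv \<phi> (dilation g s) x - \<phi> x\<bar> \<partial>lborel)
     \<le> (\<integral>\<^sup>+x. (\<integral>\<^sup>+z. ennreal (\<bar>\<phi> (x - s *\<^sub>R z) - \<phi> x\<bar> * g z) \<partial>lborel) \<partial>lborel)"
    by (intro nn_integral_mono abs_conv_dilation_minus_le[OF _ _ g0 g1 s \<phi>M]) simp_all
  also have "\<dots> = (\<integral>\<^sup>+z. (\<integral>\<^sup>+x. ennreal (\<bar>\<phi> (x - s *\<^sub>R z) - \<phi> x\<bar> * g z) \<partial>lborel) \<partial>lborel)"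
    by (rule lborel_pair.Fubini'[symmetric]) measurable
  also have "\<dots> = (\<integral>\<^sup>+z. ennreal (g z) * (\<integral>\<^sup>+x. ennreal \<bar>\<phi> (x + - (s *\<^sub>R z)) - \<phi> x\<bar> \<partial>lborel) \<partial>lborel)"
    by (intro nn_integral_cong, subst nn_integral_cmult[symmetric])
       (auto intro!: nn_integral_cong simp: ennreal_mult[symmetric] g0 mult.commute)
  finally show ?thesis .
qed

text \<open>The family \<open>dilation g s\<close> is an approximate identity in \<open>L\<^sub>1\<close>: the mass of \<open>g\<close> beyond
  some radius \<open>T\<close> is small, and within it the translation by \<open>s z\<close> moves \<open>\<phi>\<close> little in \<open>L\<^sub>1\<close>.\<close>
lemma conv_dilation_tendsto_L1:
  fixes g \<phi> :: "'a::euclidean_space \<Rightarrow> real"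
  assumes [measurable]: "g \<in> borel_measurable borel"
    and g0: "\<And>z. g z \<ge> 0" and g1: "(\<integral>\<^sup>+z. ennreal (g z) \<partial>lborel) = 1"
    and \<phi>M: "\<And>y. \<bar>\<phi> y\<bar> \<le> M" and \<phi>i: "integrable lborel \<phi>"
  shows "((\<lambda>s. \<integral>\<^sup>+x. ennreal \<bar>conv \<phi> (dilation g s) x - \<phi> x\<bar> \<partial>lborel) \<longlongrightarrow> 0) (at_right 0)"
proof (rule ennreal_tendsto_0I)
  fix \<eta> :: real assume \<eta>: "\<eta> > 0"
  have [measurable]: "\<phi> \<in> borel_measurable borel"
    using borel_measurable_integrable[OF \<phi>i] by simp
  define a where "a = (\<integral>x. \<bar>\<phi> x\<bar> \<partial>lborel)"
  have a: "(\<integral>\<^sup>+x. ennreal \<bar>\<phi> x\<bar> \<partial>lborel) = ennreal a" "a \<ge> 0"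
    unfolding a_def using \<phi>i by (auto intro!: nn_integral_eq_integral)
  let ?\<tau> = "\<lambda>t. (\<integral>\<^sup>+x. ennreal \<bar>\<phi> (x + t) - \<phi> x\<bar> \<partial>lborel)"
  obtain \<delta> where \<delta>: "\<delta> > 0" "\<And>t. norm t < \<delta> \<Longrightarrow> ?\<tau> t < ennreal (\<eta>/3)"
    using L1_translation_continuous_uniform[OF integrable_imp_L1_translation_continuous[OF \<phi>i], of "\<eta>/3"]
      \<eta> by auto
  obtain T where T: "T \<ge> 0"
    and tail: "(\<integral>\<^sup>+z. ennreal (g z) * indicator {z. norm z > T} z \<partial>lborel) < ennreal (\<eta> / (3 * (2 * a + 1)))"
    using nn_integral_tail_small[of g "\<eta> / (3 * (2 * a + 1))"] g1 \<eta> a(2) by auto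
  have "ennreal (2 * a) * (\<integral>\<^sup>+z. ennreal (g z) * indicator {z. norm z > T} z \<partial>lborel)
      \<le> ennreal (2 * a * (\<eta> / (3 * (2 * a + 1))))"
    using tail a(2) \<eta> by (subst ennreal_mult) (auto intro!: mult_left_mono)
  also have "\<dots> \<le> ennreal (\<eta>/3)"
    using a(2) \<eta> by (intro ennreal_leI) (simp add: field_simps)
  finally have tail': "ennreal (2 * a) * (\<integral>\<^sup>+z. ennreal (g z) * indicator {z. norm z > T} z \<partial>lborel)
      \<le> ennreal (\<eta>/3)" .
  show "eventually (\<lambda>s. (\<integral>\<^sup>+x. ennreal \<bar>conv \<phi> (dilation g s) x - \<phi> x\<bar> \<partial>lborel) < ennreal \<eta>)
          (at_right 0)"
    unfolding eventually_at_right_field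
  proof (intro exI[of _ "\<delta> / (T + 1)"] conjI allI impI)
    show "0 < \<delta> / (T + 1)" using \<delta> T by simp
    fix s :: real assume s: "0 < s" "s < \<delta> / (T + 1)"
    have "(\<integral>\<^sup>+x. ennreal \<bar>conv \<phi> (dilation g s) x - \<phi> x\<bar> \<partial>lborel)
        \<le> (\<integral>\<^sup>+z. ennreal (g z) * ?\<tau> (- (s *\<^sub>R z)) \<partial>lborel)"
      by (rule nn_integral_conv_dilation_diff_le[OF _ _ g0 g1 s(1) \<phi>M]) simp_all
    also have "\<dots> \<le> (\<integral>\<^sup>+z. ennreal (\<eta>/3) * ennreal (g z)
                      + ennreal (2 * a) * (ennreal (g z) * indicator {z. norm z > T} z) \<partial>lborel)"
    proof (intro nn_integral_mono)
      fix z :: 'a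
      show "ennreal (g z) * ?\<tau> (- (s *\<^sub>R z))
          \<le> ennreal (\<eta>/3) * ennreal (g z) + ennreal (2 * a) * (ennreal (g z) * indicator {z. norm z > T} z)"
      proof (cases "norm z > T")
        case True
        have "?\<tau> (- (s *\<^sub>R z)) \<le> ennreal (2 * a)"
          using nn_integral_translate_diff_le[of \<phi> "- (s *\<^sub>R z)"] a by (simp add: ennreal_mult)
        then have "ennreal (g z) * ?\<tau> (- (s *\<^sub>R z)) \<le> ennreal (2 * a) * (ennreal (g z) * indicator {z. norm z > T} z)"
          using True by (simp add: mult.commute mult_left_mono)
        then show ?thesis by (simp add: add_increasing)
      next
        case False
        have "norm (- (s *\<^sub>R z)) \<le> s * T" using s False by (simp add: mult_left_mono)
        also have "\<dots> < \<delta>" using s T \<delta> by (simp add: field_simps)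
        finally have "?\<tau> (- (s *\<^sub>R z)) < ennreal (\<eta>/3)" by (rule \<delta>(2))
        then show ?thesis by (simp add: mult.commute mult_left_mono add_increasing2 less_imp_le)
      qed
    qed
    also have "\<dots> = ennreal (\<eta>/3) + ennreal (2 * a) * (\<integral>\<^sup>+z. ennreal (g z) * indicator {z. norm z > T} z \<partial>lborel)"
      using g1 by (subst nn_integral_add) (auto simp: nn_integral_cmult)
    also have "\<dots> \<le> ennreal (\<eta>/3) + ennreal (\<eta>/3)"
      using tail' by (rule add_left_mono)
    also have "\<dots> < ennreal \<eta>"
      using \<eta> by (simp add: ennreal_plus[symmetric] ennreal_less_iff del: ennreal_plus)
    finally show "(\<integral>\<^sup>+x. ennreal \<bar>conv \<phi> (dilation g s) x - \<phi> x\<bar> \<partial>lborel) < ennreal \<eta>" .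
  qed
qed

section \<open>Riemann sums on a grid\<close>

definition grid_round :: "real \<Rightarrow> 'a::euclidean_space \<Rightarrow> 'a" where
  "grid_round d y = (\<Sum>b\<in>Basis. (d * of_int \<lfloor>(y \<bullet> b) / d\<rfloor>) *\<^sub>R b)"

definition grid_cell_mass :: "real \<Rightarrow> ('a::euclidean_space \<Rightarrow> real) \<Rightarrow> 'a \<Rightarrow> real" where
  "grid_cell_mass d \<phi> p = (\<integral>y. \<phi> y * indicator (grid_round d -` {p}) y \<partial>lborel)"

text \<open>The Riemann sum of \<open>conv \<phi> k\<close> on the grid of mesh \<open>d\<close>: the \<open>\<phi>\<close>-mass of each cell is
  placed at its corner. Since \<open>\<phi>\<close> will vanish outside \<open>Q\<close>, only the corners of cells meeting
  \<open>Q\<close> are summed over.\<close>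
definition riemann_conv :: "real \<Rightarrow> 'a::euclidean_space set \<Rightarrow> ('a \<Rightarrow> real) \<Rightarrow> ('a \<Rightarrow> real) \<Rightarrow> 'a \<Rightarrow> real"
  where "riemann_conv d Q \<phi> k x = (\<Sum>p\<in>grid_round d ` Q. grid_cell_mass d \<phi> p * k (x - p))"

lemma measurable_grid_round[measurable]: "grid_round d \<in> borel_measurable borel"
  unfolding grid_round_def by measurable

lemma grid_round_vimage_sets[measurable]: "grid_round d -` {p} \<in> sets borel"
  using measurable_sets[OF measurable_grid_round, of "{p}" d] by simp

lemma norm_diff_grid_round_le:
  fixes y :: "'a::euclidean_space" and d :: real
  assumes d: "d > 0"
  shows "norm (y - grid_round d y) \<le> DIM('a) * d"
proof -
  have "y - grid_round d y = (\<Sum>b\<in>Basis. ((y \<bullet> b) - d * of_int \<lfloor>(y \<bullet> b) / d\<rfloor>) *\<^sub>R b)"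
    unfolding grid_round_def by (subst (1) euclidean_representation[symmetric, of y])
      (simp add: sum_subtractf scaleR_diff_left)
  also have "norm \<dots> \<le> (\<Sum>b\<in>(Basis::'a set). norm (((y \<bullet> b) - d * of_int \<lfloor>(y \<bullet> b) / d\<rfloor>) *\<^sub>R b))"
    by (rule norm_sum)
  also have "\<dots> \<le> (\<Sum>b\<in>(Basis::'a set). d)"
  proof (rule sum_mono)
    fix b :: 'a assume b: "b \<in> Basis"
    define t where "t = (y \<bullet> b) / d"
    have yt: "y \<bullet> b = d * t" using d by (simp add: t_def)
    have "d * of_int \<lfloor>t\<rfloor> \<le> d * t" "d * t < d * (of_int \<lfloor>t\<rfloor> + 1)"
      using d by (intro mult_left_mono mult_strict_left_mono; linarith)+
    then have "d * of_int \<lfloor>(y \<bullet> b) / d\<rfloor> \<le> y \<bullet> b" "y \<bullet> b < d * of_int \<lfloor>(y \<bullet> b) / d\<rfloor> + d"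
      by (simp_all add: yt t_def[symmetric] distrib_left)
    then show "norm (((y \<bullet> b) - d * of_int \<lfloor>(y \<bullet> b) / d\<rfloor>) *\<^sub>R b) \<le> d"
      using b by simp
  qed
  finally show ?thesis by simp
qed

lemma finite_grid_round_image:
  fixes Q :: "'a::euclidean_space set"
  assumes Q: "bounded Q" and d: "d > 0"
  shows "finite (grid_round d ` Q)"
proof -
  obtain R where R: "\<And>y. y \<in> Q \<Longrightarrow> norm y \<le> R" using Q by (auto simp: bounded_iff)
  define N where "N = \<lceil>R / d\<rceil>"
  let ?F = "\<lambda>k. (\<Sum>b\<in>(Basis::'a set). (d * of_int (k b)) *\<^sub>R b)"
  have "grid_round d ` Q \<subseteq> ?F ` (\<Pi>\<^sub>E b\<in>Basis. {-N..N})"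
  proof
    fix z assume "z \<in> grid_round d ` Q"
    then obtain y where y: "y \<in> Q" "z = grid_round d y" by auto
    have "restrict (\<lambda>b. \<lfloor>(y \<bullet> b) / d\<rfloor>) Basis \<in> (\<Pi>\<^sub>E b\<in>Basis. {-N..N})"
    proof
      fix b :: 'a assume b: "b \<in> Basis"
      have "\<bar>y \<bullet> b\<bar> \<le> R" using Basis_le_norm[OF b, of y] R[OF y(1)] by simp
      then have "- (R / d) \<le> (y \<bullet> b) / d" "(y \<bullet> b) / d \<le> R / d"
        using d by (simp_all add: field_simps)
      then have "\<lfloor>- (R / d)\<rfloor> \<le> \<lfloor>(y \<bullet> b) / d\<rfloor>" "\<lfloor>(y \<bullet> b) / d\<rfloor> \<le> \<lceil>R / d\<rceil>"
        by (auto intro: floor_mono order_trans[OF floor_mono floor_le_ceiling])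
      then show "restrict (\<lambda>b. \<lfloor>(y \<bullet> b) / d\<rfloor>) Basis b \<in> {-N..N}"
        using b by (simp add: N_def floor_minus)
    qed auto
    moreover have "z = ?F (restrict (\<lambda>b. \<lfloor>(y \<bullet> b) / d\<rfloor>) Basis)"
      using y by (simp add: grid_round_def)
    ultimately show "z \<in> ?F ` (\<Pi>\<^sub>E b\<in>Basis. {-N..N})" by blast
  qed
  then show ?thesis
    by (rule finite_subset) (intro finite_imageI finite_PiE; simp)
qed

lemma grid_cell_mass_nonneg: "(\<And>y. \<phi> y \<ge> 0) \<Longrightarrow> grid_cell_mass d \<phi> p \<ge> 0"
  unfolding grid_cell_mass_def by (rule integral_nonneg_AE) (auto simp: indicator_def)

lemma integrable_mult_grid_cell:
  fixes \<phi> :: "'a::euclidean_space \<Rightarrow> real"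
  shows "integrable lborel \<phi> \<Longrightarrow> integrable lborel (\<lambda>y. \<phi> y * indicator (grid_round d -` {p}) y)"
  using integrable_mult_indicator[of "grid_round d -` {p}" lborel \<phi>] by (simp add: mult.commute)

lemma sum_grid_cells:
  fixes \<phi> :: "'a::euclidean_space \<Rightarrow> real"
  assumes fin: "finite (grid_round d ` Q)" and \<phi>Q: "\<And>y. y \<notin> Q \<Longrightarrow> \<phi> y = 0"
  shows "(\<Sum>p\<in>grid_round d ` Q. \<phi> y * indicator (grid_round d -` {p}) y * F p) = \<phi> y * F (grid_round d y)"
proof (cases "y \<in> Q")
  case True
  have "(\<Sum>p\<in>grid_round d ` Q. \<phi> y * indicator (grid_round d -` {p}) y * F p)
      = (\<Sum>p\<in>grid_round d ` Q. if grid_round d y = p then \<phi> y * F p else 0)"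
    by (intro sum.cong) (auto simp: indicator_def)
  then show ?thesis using fin True by (simp add: sum.delta)
qed (simp add: \<phi>Q)

lemma sum_grid_cell_mass:
  fixes \<phi> :: "'a::euclidean_space \<Rightarrow> real"
  assumes Q: "bounded Q" and d: "d > 0" and \<phi>Q: "\<And>y. y \<notin> Q \<Longrightarrow> \<phi> y = 0"
    and \<phi>i: "integrable lborel \<phi>"
  shows "(\<Sum>p\<in>grid_round d ` Q. grid_cell_mass d \<phi> p) = (\<integral>y. \<phi> y \<partial>lborel)"
  unfolding grid_cell_mass_def
  using sum_grid_cells[where \<phi>=\<phi> and F="\<lambda>_. 1", OF finite_grid_round_image[OF Q d] \<phi>Q]
  by (subst Bochner_Integration.integral_sum[symmetric]) (simp_all add: integrable_mult_grid_cell[OF \<phi>i])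

lemma
  fixes \<phi> k :: "'a::euclidean_space \<Rightarrow> real"
  assumes Q: "bounded Q" and d: "d > 0" and \<phi>Q: "\<And>y. y \<notin> Q \<Longrightarrow> \<phi> y = 0"
    and \<phi>i: "integrable lborel \<phi>"
  shows integrable_riemann_conv: "integrable lborel (\<lambda>y. \<phi> y * k (x - grid_round d y))"
    and riemann_conv_eq_integral:
      "riemann_conv d Q \<phi> k x = (\<integral>y. \<phi> y * k (x - grid_round d y) \<partial>lborel)"
proof -
  have cells: "integrable lborel (\<lambda>y. \<phi> y * indicator (grid_round d -` {p}) y * k (x - p))" for p
    using integrable_mult_grid_cell[OF \<phi>i] by simp
  note sum_cells = sum_grid_cells[where \<phi>=\<phi> and F="\<lambda>p. k (x - p)", OF finite_grid_round_image[OF Q d] \<phi>Q]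
  have "integrable lborel (\<lambda>y. \<Sum>p\<in>grid_round d ` Q. \<phi> y * indicator (grid_round d -` {p}) y * k (x - p))"
    by (intro Bochner_Integration.integrable_sum cells)
  then show "integrable lborel (\<lambda>y. \<phi> y * k (x - grid_round d y))"
    by (simp add: sum_cells)
  have "riemann_conv d Q \<phi> k x
      = (\<Sum>p\<in>grid_round d ` Q. \<integral>y. \<phi> y * indicator (grid_round d -` {p}) y * k (x - p) \<partial>lborel)"
    by (simp add: riemann_conv_def grid_cell_mass_def)
  also have "\<dots> = (\<integral>y. (\<Sum>p\<in>grid_round d ` Q. \<phi> y * indicator (grid_round d -` {p}) y * k (x - p)) \<partial>lborel)"
    by (rule Bochner_Integration.integral_sum[symmetric]) (rule cells)
  finally show "riemann_conv d Q \<phi> k x = (\<integral>y. \<phi> y * k (x - grid_round d y) \<partial>lborel)"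
    by (simp add: sum_cells)
qed

lemma riemann_conv_error_le:
  fixes \<phi> k :: "'a::euclidean_space \<Rightarrow> real"
  assumes Q: "bounded Q" and d: "d > 0" and \<phi>Q: "\<And>y. y \<notin> Q \<Longrightarrow> \<phi> y = 0"
    and \<phi>i: "integrable lborel \<phi>" and \<phi>k: "integrable lborel (\<lambda>y. \<phi> y * k (x - y))"
  shows "ennreal \<bar>riemann_conv d Q \<phi> k x - conv \<phi> k x\<bar>
           \<le> (\<integral>\<^sup>+y. ennreal (\<bar>\<phi> y\<bar> * \<bar>k (x - grid_round d y) - k (x - y)\<bar>) \<partial>lborel)"
proof -
  note i1 = integrable_riemann_conv[where \<phi>=\<phi>, OF Q d \<phi>Q \<phi>i, of k x]
  have "riemann_conv d Q \<phi> k x - conv \<phi> k x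
      = (\<integral>y. \<phi> y * k (x - grid_round d y) - \<phi> y * k (x - y) \<partial>lborel)"
    using i1 \<phi>k by (simp add: riemann_conv_eq_integral[where \<phi>=\<phi>, OF Q d \<phi>Q \<phi>i] conv_def)
  then show ?thesis
    using integral_norm_bound_ennreal[OF Bochner_Integration.integrable_diff[OF i1 \<phi>k]]
    by (simp add: abs_mult right_diff_distrib[symmetric])
qed

lemma riemann_conv_dilation_L1_error_le:
  fixes g \<phi> :: "'a::euclidean_space \<Rightarrow> real" and d s :: real
  assumes [measurable]: "g \<in> borel_measurable borel" "\<phi> \<in> borel_measurable borel"
    and g0: "\<And>z. g z \<ge> 0" and gi: "(\<integral>\<^sup>+z. ennreal (g z) \<partial>lborel) < \<infinity>" and s: "s > 0"
    and d: "d > 0" and \<phi>M: "\<And>y. \<bar>\<phi> y\<bar> \<le> M" and \<phi>Q: "\<And>y. y \<notin> Q \<Longrightarrow> \<phi> y = 0"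
    and Q: "bounded Q" and \<phi>i: "integrable lborel \<phi>"
    and g_shift: "\<And>t. norm t \<le> DIM('a) * d / s \<Longrightarrow> (\<integral>\<^sup>+w. ennreal \<bar>g (w + t) - g w\<bar> \<partial>lborel) \<le> ennreal \<eta>"
  shows "(\<integral>\<^sup>+x. ennreal \<bar>riemann_conv d Q \<phi> (dilation g s) x - conv \<phi> (dilation g s) x\<bar> \<partial>lborel)
         \<le> ennreal \<eta> * (\<integral>\<^sup>+y. ennreal \<bar>\<phi> y\<bar> \<partial>lborel)"
proof -
  let ?G = "dilation g s"
  have "(\<integral>\<^sup>+x. ennreal \<bar>riemann_conv d Q \<phi> ?G x - conv \<phi> ?G x\<bar> \<partial>lborel)
     \<le> (\<integral>\<^sup>+x. (\<integral>\<^sup>+y. ennreal (\<bar>\<phi> y\<bar> * \<bar>?G (x - grid_round d y) - ?G (x - y)\<bar>) \<partial>lborel) \<partial>lborel)"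
    by (intro nn_integral_mono riemann_conv_error_le[where \<phi>=\<phi>, OF Q d \<phi>Q \<phi>i]
        integrable_bounded_mult_dilation[OF _ _ g0 gi s \<phi>M]) simp_all
  also have "\<dots> = (\<integral>\<^sup>+y. (\<integral>\<^sup>+x. ennreal (\<bar>\<phi> y\<bar> * \<bar>?G (x - grid_round d y) - ?G (x - y)\<bar>) \<partial>lborel) \<partial>lborel)"
    by (rule lborel_pair.Fubini'[symmetric]) measurable
  also have "\<dots> = (\<integral>\<^sup>+y. ennreal \<bar>\<phi> y\<bar> * (\<integral>\<^sup>+x. ennreal \<bar>?G (x - grid_round d y) - ?G (x - y)\<bar> \<partial>lborel) \<partial>lborel)"
    by (intro nn_integral_cong, subst nn_integral_cmult[symmetric]) (auto simp: ennreal_mult)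
  also have "\<dots> \<le> (\<integral>\<^sup>+y. ennreal \<bar>\<phi> y\<bar> * ennreal \<eta> \<partial>lborel)"
  proof (intro nn_integral_mono mult_left_mono)
    fix y :: 'a
    have "norm ((y - grid_round d y) /\<^sub>R s) \<le> DIM('a) * d / s"
      using norm_diff_grid_round_le[OF d, of y] s
      by (simp add: divide_right_mono divide_inverse_commute)
    then show "(\<integral>\<^sup>+x. ennreal \<bar>?G (x - grid_round d y) - ?G (x - y)\<bar> \<partial>lborel) \<le> ennreal \<eta>"
      using g_shift nn_integral_dilation_diff[of g s "grid_round d y" y] s by simp
  qed simp
  also have "\<dots> = ennreal \<eta> * (\<integral>\<^sup>+y. ennreal \<bar>\<phi> y\<bar> \<partial>lborel)"
    by (subst nn_integral_multc) (auto simp: mult.commute)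
  finally show ?thesis .
qed

section \<open>Finite mixtures\<close>

text \<open>Any \<open>m \<ge> card P + 1\<close> is allowed because surplus components get weight \<open>0\<close>.\<close>
lemma finite_mixture_in_mixtures:
  fixes g :: "'a::euclidean_space \<Rightarrow> real" and P :: "'a set"
  assumes P: "finite P" and w: "\<And>p. p \<in> P \<Longrightarrow> w p \<ge> 0" and c\<^sub>0: "c\<^sub>0 \<ge> 0"
    and sum1: "(\<Sum>p\<in>P. w p) + c\<^sub>0 = 1" and s: "s > 0" and S: "S > 0" and m: "m \<ge> card P + 1"
  shows "(\<lambda>x. (\<Sum>p\<in>P. w p * dilation g s (x - p)) + c\<^sub>0 * dilation g S (x - a)) \<in> mixtures g m"
proof -
  obtain e where e: "bij_betw e {..<card P} P"
    using ex_bij_betw_nat_finite[OF P] by (auto simp: atLeast0LessThan)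
  let ?n = "card P"
  define c where "c i = (if i < ?n then w (e i) else if i = ?n then c\<^sub>0 else 0)" for i
  define \<mu> where "\<mu> i = (if i < ?n then e i else a)" for i
  define \<sigma> where "\<sigma> i = (if i < ?n then s else if i = ?n then S else 1)" for i
  have pos: "\<forall>i<m. 0 < \<sigma> i \<and> 0 \<le> c i"
    using s S c\<^sub>0 w bij_betwE[OF e] by (auto simp: c_def \<sigma>_def)
  have reindex: "(\<Sum>i<?n. F (e i)) = (\<Sum>p\<in>P. F p)" for F :: "'a \<Rightarrow> real"
    using sum.reindex_bij_betw[OF e, of F] by simp
  have split: "(\<Sum>i<m. G i) = (\<Sum>i<?n. G i) + G ?n" if "\<And>i. i > ?n \<Longrightarrow> G i = 0" for G :: "nat \<Rightarrow> real"
  proof -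
    have "(\<Sum>i<m. G i) = (\<Sum>i<Suc ?n. G i)"
      by (rule sum.mono_neutral_right) (use m that in auto)
    then show ?thesis by simp
  qed
  have "(\<Sum>i<m. c i) = (\<Sum>i<?n. w (e i)) + c\<^sub>0"
    by (subst split) (auto simp: c_def)
  then have sc: "(\<Sum>i<m. c i) = 1" using sum1 by (simp add: reindex)
  have "(\<lambda>x. (\<Sum>p\<in>P. w p * dilation g s (x - p)) + c\<^sub>0 * dilation g S (x - a))
      = (\<lambda>x. \<Sum>i<m. c i / \<sigma> i ^ DIM('a) * g ((x - \<mu> i) /\<^sub>R \<sigma> i))"
  proof
    fix x
    have "(\<Sum>i<m. c i / \<sigma> i ^ DIM('a) * g ((x - \<mu> i) /\<^sub>R \<sigma> i))
       = (\<Sum>i<?n. w (e i) * dilation g s (x - e i)) + c\<^sub>0 * dilation g S (x - a)"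
      by (subst split) (auto simp: c_def \<sigma>_def \<mu>_def dilation_def)
    then show "(\<Sum>p\<in>P. w p * dilation g s (x - p)) + c\<^sub>0 * dilation g S (x - a)
        = (\<Sum>i<m. c i / \<sigma> i ^ DIM('a) * g ((x - \<mu> i) /\<^sub>R \<sigma> i))"
      by (simp add: reindex[of "\<lambda>p. w p * dilation g s (x - p)"])
  qed
  then show ?thesis unfolding mixtures_def using pos sc by blast
qed

lemma mixtures_nonempty:
  assumes "m \<ge> 1"
  shows "mixtures g m \<noteq> {}"
  using finite_mixture_in_mixtures[where P="{}" and w="\<lambda>_. 0" and c\<^sub>0=1 and s=1 and S=1 and m=m
      and g=g and a=0] assms by auto

lemma riemann_conv_mixture_in_mixtures:
  fixes \<phi> :: "'a::euclidean_space \<Rightarrow> real"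
  assumes \<phi>0: "\<And>y. \<phi> y \<ge> 0" and \<phi>Q: "\<And>y. y \<notin> Q \<Longrightarrow> \<phi> y = 0" and Q: "bounded Q"
    and \<phi>i: "integrable lborel \<phi>" and \<phi>1: "(\<integral>y. \<phi> y \<partial>lborel) \<le> 1"
    and d: "d > 0" and s: "s > 0" and S: "S > 0" and m: "m \<ge> card (grid_round d ` Q) + 1"
  shows "(\<lambda>x. riemann_conv d Q \<phi> (dilation g s) x + (1 - (\<integral>y. \<phi> y \<partial>lborel)) * dilation g S x)
           \<in> mixtures g m"
  using finite_mixture_in_mixtures[OF finite_grid_round_image[OF Q d] grid_cell_mass_nonneg[of \<phi>, OF \<phi>0]
      _ _ s S m, where c\<^sub>0="1 - (\<integral>y. \<phi> y \<partial>lborel)" and g=g and a=0] \<phi>1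
  by (simp add: riemann_conv_def sum_grid_cell_mass[where \<phi>=\<phi>, OF Q d \<phi>Q \<phi>i])

lemma mixtures_AE_cong:
  fixes g g' :: "'a::euclidean_space \<Rightarrow> real"
  assumes ae: "AE x in lborel. g x = g' x" and h': "h' \<in> mixtures g' m"
  obtains h where "h \<in> mixtures g m" "AE x in lborel. h x = h' x"
proof -
  obtain c \<mu> \<sigma> where pos: "\<forall>i<m. 0 < \<sigma> i \<and> 0 \<le> c i" and sc: "(\<Sum>i<m. c i) = 1"
    and h'_eq: "h' = (\<lambda>x. \<Sum>i<m. c i / \<sigma> i ^ DIM('a) * g' ((x - \<mu> i) /\<^sub>R \<sigma> i))"
    using h' unfolding mixtures_def by blast
  define h where "h = (\<lambda>x. \<Sum>i<m. c i / \<sigma> i ^ DIM('a) * g ((x - \<mu> i) /\<^sub>R \<sigma> i))"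
  have "h \<in> mixtures g m" unfolding mixtures_def h_def using pos sc by blast
  moreover have "AE x in lborel. \<forall>i\<in>{..<m}. g ((x - \<mu> i) /\<^sub>R \<sigma> i) = g' ((x - \<mu> i) /\<^sub>R \<sigma> i)"
    using pos by (intro AE_finite_allI AE_lborel_affine[OF _ ae]) auto
  then have "AE x in lborel. h x = h' x"
    by eventually_elim (simp add: h_def h'_eq)
  ultimately show ?thesis using that by blast
qed

text \<open>Choose \<open>hs m \<in> M m\<close> within \<open>1 / Suc m\<close> of the infimum of \<open>E\<close> over \<open>M m\<close>; the infima tend to \<open>0\<close>.\<close>
lemma approximating_sequence_exists:
  fixes E :: "'b \<Rightarrow> ennreal" and M :: "nat \<Rightarrow> 'b set"
  assumes ne: "\<And>m. m \<ge> 1 \<Longrightarrow> M m \<noteq> {}"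
    and approx: "\<And>e. e > 0 \<Longrightarrow> eventually (\<lambda>m. \<exists>h\<in>M m. E h < ennreal e) sequentially"
  shows "\<exists>hs. (\<forall>m\<ge>1. hs m \<in> M m) \<and> (\<lambda>m. E (hs m)) \<longlonglongrightarrow> 0"
proof -
  define inf where "inf m = (INF h\<in>M m. E h)" for m
  have "\<exists>h\<in>M m. E h \<le> inf m + ennreal (1 / Suc m)" if m: "m \<ge> 1" for m
  proof (cases "inf m < \<infinity>")
    case True
    then obtain r where r: "inf m = ennreal r" "r \<ge> 0"
      by (cases "inf m" rule: ennreal_cases) auto
    then have "inf m < inf m + ennreal (1 / Suc m)"
      by (simp add: ennreal_plus[symmetric] ennreal_less_iff del: ennreal_plus)
    then obtain h where "h \<in> M m" "E h < inf m + ennreal (1 / Suc m)"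
      unfolding inf_def by (auto simp: INF_less_iff)
    then show ?thesis by (auto intro: less_imp_le)
  next
    case False
    then show ?thesis using ne[OF m] by (auto simp: not_less top_unique)
  qed
  then have "\<forall>m. \<exists>h. m \<ge> 1 \<longrightarrow> h \<in> M m \<and> E h \<le> inf m + ennreal (1 / Suc m)"
    by blast
  from choice[OF this] obtain hs
    where "\<forall>m. m \<ge> 1 \<longrightarrow> hs m \<in> M m \<and> E (hs m) \<le> inf m + ennreal (1 / Suc m)"
    by blast
  then have hs: "\<And>m. m \<ge> 1 \<Longrightarrow> hs m \<in> M m \<and> E (hs m) \<le> inf m + ennreal (1 / Suc m)"
    by blast
  have inf_lim: "inf \<longlonglongrightarrow> 0"
  proof (rule ennreal_tendsto_0I)
    fix e :: real assume "e > 0"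
    from approx[OF this] show "eventually (\<lambda>m. inf m < ennreal e) sequentially"
    proof eventually_elim
      case (elim m)
      then obtain h where "h \<in> M m" "E h < ennreal e" by blast
      then show ?case unfolding inf_def by (meson INF_lower le_less_trans)
    qed
  qed
  have "(\<lambda>m. ennreal (1 / Suc m)) \<longlonglongrightarrow> ennreal 0"
    using LIMSEQ_inverse_real_of_nat by (intro tendsto_ennrealI) (simp add: inverse_eq_divide)
  from tendsto_add[OF inf_lim this] have upper: "(\<lambda>m. inf m + ennreal (1 / Suc m)) \<longlonglongrightarrow> 0"
    by simp
  have "eventually (\<lambda>m. E (hs m) \<le> inf m + ennreal (1 / Suc m)) sequentially"
    using eventually_ge_at_top[of "1::nat"] by eventually_elim (use hs in blast)
  from tendsto_sandwich[OF always_eventually[OF allI[OF zero_le]] this tendsto_const upper]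
  have "(\<lambda>m. E (hs m)) \<longlonglongrightarrow> 0" .
  then show ?thesis using hs by blast
qed

section \<open>Approximation in \<open>L\<^sub>p\<close>\<close>

lemma powr_le_powr_minus_one_mult:
  fixes u K p :: real
  assumes u: "0 \<le> u" "u \<le> K" and p: "p \<ge> 1"
  shows "u powr p \<le> K powr (p - 1) * u"
proof (cases "u = 0")
  case False
  have "u powr p = u powr ((p - 1) + 1)" by simp
  also have "\<dots> = u powr (p - 1) * u"
    unfolding powr_add using u by simp
  also have "\<dots> \<le> K powr (p - 1) * u"
    using u p by (intro mult_right_mono powr_mono2) auto
  finally show ?thesis .
qed simp

lemma nn_integral_abs_powr_le:
  fixes u :: "'b \<Rightarrow> real"
  assumes [measurable]: "u \<in> borel_measurable M" and uK: "\<And>x. \<bar>u x\<bar> \<le> K" and p: "p \<ge> 1"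
  shows "(\<integral>\<^sup>+x. ennreal (\<bar>u x\<bar> powr p) \<partial>M) \<le> ennreal (K powr (p - 1)) * (\<integral>\<^sup>+x. ennreal \<bar>u x\<bar> \<partial>M)"
proof -
  have "(\<integral>\<^sup>+x. ennreal (\<bar>u x\<bar> powr p) \<partial>M) \<le> (\<integral>\<^sup>+x. ennreal (K powr (p - 1)) * ennreal \<bar>u x\<bar> \<partial>M)"
    using powr_le_powr_minus_one_mult[OF _ uK p]
    by (intro nn_integral_mono) (simp add: ennreal_mult[symmetric] ennreal_leI)
  also have "\<dots> = ennreal (K powr (p - 1)) * (\<integral>\<^sup>+x. ennreal \<bar>u x\<bar> \<partial>M)"
    by (rule nn_integral_cmult) simp
  finally show ?thesis .
qed

lemma tendsto_nn_integral_abs_powr: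
  fixes u :: "'i \<Rightarrow> 'b \<Rightarrow> real"
  assumes [measurable]: "\<And>i. u i \<in> borel_measurable M"
    and bounded: "eventually (\<lambda>i. \<forall>x. \<bar>u i x\<bar> \<le> K) F" and p: "p \<ge> 1"
    and lim: "((\<lambda>i. \<integral>\<^sup>+x. ennreal \<bar>u i x\<bar> \<partial>M) \<longlongrightarrow> 0) F"
  shows "((\<lambda>i. \<integral>\<^sup>+x. ennreal (\<bar>u i x\<bar> powr p) \<partial>M) \<longlongrightarrow> 0) F"
proof (rule tendsto_sandwich[OF always_eventually[OF allI[OF zero_le]] _ tendsto_const])
  show "eventually (\<lambda>i. (\<integral>\<^sup>+x. ennreal (\<bar>u i x\<bar> powr p) \<partial>M)
          \<le> ennreal (K powr (p - 1)) * (\<integral>\<^sup>+x. ennreal \<bar>u i x\<bar> \<partial>M)) F"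
    using bounded by eventually_elim (use p in \<open>auto intro: nn_integral_abs_powr_le\<close>)
  show "((\<lambda>i. ennreal (K powr (p - 1)) * (\<integral>\<^sup>+x. ennreal \<bar>u i x\<bar> \<partial>M)) \<longlongrightarrow> 0) F"
    using ennreal_tendsto_cmult[OF _ lim, of "ennreal (K powr (p - 1))"] by simp
qed

lemma abs_add4_powr_le:
  fixes a b c d p :: real
  assumes p: "p \<ge> 0"
  shows "\<bar>a + b + c + d\<bar> powr p \<le> 4 powr p * (\<bar>a\<bar> powr p + \<bar>b\<bar> powr p + \<bar>c\<bar> powr p + \<bar>d\<bar> powr p)"
proof -
  define m where "m = max (max \<bar>a\<bar> \<bar>b\<bar>) (max \<bar>c\<bar> \<bar>d\<bar>)"
  have "\<bar>a + b + c + d\<bar> powr p \<le> (4 * m) powr p"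
    unfolding m_def using p by (intro powr_mono2) auto
  also have "\<dots> = 4 powr p * m powr p"
    unfolding m_def by (simp add: powr_mult)
  also have "m powr p \<le> \<bar>a\<bar> powr p + \<bar>b\<bar> powr p + \<bar>c\<bar> powr p + \<bar>d\<bar> powr p"
    unfolding m_def by (auto simp: max_def add_increasing add_increasing2)
  finally show ?thesis by simp
qed

lemma nn_integral_abs_add4_powr_less:
  fixes a b c d :: "'b \<Rightarrow> real"
  assumes [measurable]: "a \<in> borel_measurable M" "b \<in> borel_measurable M"
    "c \<in> borel_measurable M" "d \<in> borel_measurable M" and p: "p \<ge> 0"
    and a: "(\<integral>\<^sup>+x. ennreal (\<bar>a x\<bar> powr p) \<partial>M) < ennreal \<eta>"
    and b: "(\<integral>\<^sup>+x. ennreal (\<bar>b x\<bar> powr p) \<partial>M) < ennreal \<eta>"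
    and c: "(\<integral>\<^sup>+x. ennreal (\<bar>c x\<bar> powr p) \<partial>M) < ennreal \<eta>"
    and d: "(\<integral>\<^sup>+x. ennreal (\<bar>d x\<bar> powr p) \<partial>M) < ennreal \<eta>"
  shows "(\<integral>\<^sup>+x. ennreal (\<bar>a x + b x + c x + d x\<bar> powr p) \<partial>M) < ennreal (4 powr p * (4 * \<eta>))"
proof -
  have \<eta>: "\<eta> > 0" using le_less_trans[OF zero_le a] by simp
  have "(\<integral>\<^sup>+x. ennreal (\<bar>a x + b x + c x + d x\<bar> powr p) \<partial>M)
    \<le> (\<integral>\<^sup>+x. ennreal (4 powr p) * (ennreal (\<bar>a x\<bar> powr p) + ennreal (\<bar>b x\<bar> powr p)
          + ennreal (\<bar>c x\<bar> powr p) + ennreal (\<bar>d x\<bar> powr p)) \<partial>M)"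
    using abs_add4_powr_le[OF p]
    by (intro nn_integral_mono)
       (simp add: ennreal_plus[symmetric] ennreal_mult[symmetric] ennreal_leI del: ennreal_plus)
  also have "\<dots> = ennreal (4 powr p) * ((\<integral>\<^sup>+x. ennreal (\<bar>a x\<bar> powr p) \<partial>M)
      + (\<integral>\<^sup>+x. ennreal (\<bar>b x\<bar> powr p) \<partial>M) + (\<integral>\<^sup>+x. ennreal (\<bar>c x\<bar> powr p) \<partial>M)
      + (\<integral>\<^sup>+x. ennreal (\<bar>d x\<bar> powr p) \<partial>M))"
    by (simp add: nn_integral_cmult nn_integral_add)
  also have "\<dots> < ennreal (4 powr p) * ennreal (\<eta> + \<eta> + \<eta> + \<eta>)"
    by (intro ennreal_mult_strict_left_mono add_mono_ennreal a b c d) simp_all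
  also have "\<dots> = ennreal (4 powr p * (4 * \<eta>))"
    using \<eta> by (simp add: ennreal_mult[symmetric])
  finally show ?thesis .
qed

lemma conv_dilation_nonneg:
  assumes "\<And>z. g z \<ge> 0" "s > 0" "\<And>y. \<phi> y \<ge> 0"
  shows "conv \<phi> (dilation g s) x \<ge> 0"
  unfolding conv_def using assms by (intro integral_nonneg_AE AE_I2) (simp add: dilation_nonneg)

lemma conv_dilation_le:
  fixes g \<phi> :: "'a::euclidean_space \<Rightarrow> real"
  assumes [measurable]: "g \<in> borel_measurable borel" "\<phi> \<in> borel_measurable borel"
    and g0: "\<And>z. g z \<ge> 0" and g1: "(\<integral>\<^sup>+z. ennreal (g z) \<partial>lborel) = 1" and s: "s > 0"
    and \<phi>M: "\<And>y. \<bar>\<phi> y\<bar> \<le> M"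
  shows "conv \<phi> (dilation g s) x \<le> M"
proof -
  have "conv \<phi> (dilation g s) x \<le> (\<integral>y. M * dilation g s (x - y) \<partial>lborel)"
    unfolding conv_def using g1 \<phi>M dilation_nonneg[of g, OF g0 s]
    by (intro integral_mono integrable_bounded_mult_dilation[OF _ _ g0 _ s \<phi>M]
        integrable_mult_right integrable_dilation[OF _ g0 g1 s])
       (auto intro: mult_right_mono order_trans[OF abs_ge_self])
  also have "\<dots> = M" using integral_dilation[OF _ g0 g1 s] by simp
  finally show ?thesis .
qed

lemma conv_dilation_le_sup:
  fixes g \<phi> :: "'a::euclidean_space \<Rightarrow> real"
  assumes [measurable]: "g \<in> borel_measurable borel" "\<phi> \<in> borel_measurable borel"
    and g0: "\<And>z. g z \<ge> 0" and gi: "(\<integral>\<^sup>+z. ennreal (g z) \<partial>lborel) < \<infinity>" and gB: "\<And>z. g z \<le> B"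
    and s: "s > 0" and \<phi>0: "\<And>y. \<phi> y \<ge> 0" and \<phi>M: "\<And>y. \<bar>\<phi> y\<bar> \<le> M" and \<phi>i: "integrable lborel \<phi>"
  shows "conv \<phi> (dilation g s) x \<le> B / s ^ DIM('a) * (\<integral>y. \<phi> y \<partial>lborel)"
proof -
  have "conv \<phi> (dilation g s) x \<le> (\<integral>y. \<phi> y * (B / s ^ DIM('a)) \<partial>lborel)"
    unfolding conv_def using \<phi>0 gB s
    by (intro integral_mono integrable_bounded_mult_dilation[OF _ _ g0 gi s \<phi>M] integrable_mult_left \<phi>i)
       (auto simp: dilation_def intro!: mult_left_mono divide_right_mono)
  then show ?thesis by (simp add: mult.commute)
qed

lemma riemann_conv_dilation_bounds:
  fixes g \<phi> :: "'a::euclidean_space \<Rightarrow> real"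
  assumes g0: "\<And>z. g z \<ge> 0" and gB: "\<And>z. g z \<le> B" and s: "s > 0" and d: "d > 0"
    and \<phi>0: "\<And>y. \<phi> y \<ge> 0" and \<phi>Q: "\<And>y. y \<notin> Q \<Longrightarrow> \<phi> y = 0" and Q: "bounded Q"
    and \<phi>i: "integrable lborel \<phi>"
  shows "0 \<le> riemann_conv d Q \<phi> (dilation g s) x"
    and "riemann_conv d Q \<phi> (dilation g s) x \<le> B / s ^ DIM('a) * (\<integral>y. \<phi> y \<partial>lborel)"
proof -
  show "0 \<le> riemann_conv d Q \<phi> (dilation g s) x"
    unfolding riemann_conv_def
    by (intro sum_nonneg mult_nonneg_nonneg grid_cell_mass_nonneg dilation_nonneg) (use g0 s \<phi>0 in auto)
  have "riemann_conv d Q \<phi> (dilation g s) x \<le> (\<Sum>p\<in>grid_round d ` Q. grid_cell_mass d \<phi> p * (B / s ^ DIM('a)))"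
    unfolding riemann_conv_def using gB s
    by (intro sum_mono mult_left_mono grid_cell_mass_nonneg \<phi>0)
       (auto simp: dilation_def intro: divide_right_mono)
  also have "\<dots> = B / s ^ DIM('a) * (\<integral>y. \<phi> y \<partial>lborel)"
    by (simp add: sum_distrib_right[symmetric] sum_grid_cell_mass[where \<phi>=\<phi>, OF Q d \<phi>Q \<phi>i] mult.commute
        del: times_divide_eq_left times_divide_eq_right)
  finally show "riemann_conv d Q \<phi> (dilation g s) x \<le> B / s ^ DIM('a) * (\<integral>y. \<phi> y \<partial>lborel)" .
qed

lemma conv_dilation_tendsto_Lp:
  fixes g \<phi> :: "'a::euclidean_space \<Rightarrow> real"
  assumes [measurable]: "g \<in> borel_measurable borel"
    and g0: "\<And>z. g z \<ge> 0" and g1: "(\<integral>\<^sup>+z. ennreal (g z) \<partial>lborel) = 1"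
    and \<phi>0: "\<And>y. \<phi> y \<ge> 0" and \<phi>M: "\<And>y. \<phi> y \<le> M" and \<phi>i: "integrable lborel \<phi>" and p: "p \<ge> 1"
  shows "((\<lambda>s. \<integral>\<^sup>+x. ennreal (\<bar>conv \<phi> (dilation g s) x - \<phi> x\<bar> powr p) \<partial>lborel) \<longlongrightarrow> 0) (at_right 0)"
proof (rule tendsto_nn_integral_abs_powr[OF _ _ p])
  have [measurable]: "\<phi> \<in> borel_measurable borel"
    using borel_measurable_integrable[OF \<phi>i] by simp
  have \<phi>M': "\<bar>\<phi> y\<bar> \<le> M" for y using \<phi>0 \<phi>M by simp
  show "(\<lambda>x. conv \<phi> (dilation g s) x - \<phi> x) \<in> borel_measurable lborel" for s
    by simp
  show "eventually (\<lambda>s. \<forall>x. \<bar>conv \<phi> (dilation g s) x - \<phi> x\<bar> \<le> M) (at_right 0)"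
    using eventually_at_right_less
  proof eventually_elim
    case (elim s)
    show ?case
    proof
      fix x
      have "0 \<le> conv \<phi> (dilation g s) x" "conv \<phi> (dilation g s) x \<le> M"
        using elim conv_dilation_nonneg[of g s \<phi>] conv_dilation_le[OF _ _ g0 g1 _ \<phi>M'] g0 \<phi>0
        by auto
      then show "\<bar>conv \<phi> (dilation g s) x - \<phi> x\<bar> \<le> M"
        using \<phi>0[of x] \<phi>M[of x] by linarith
    qed
  qed
  show "((\<lambda>s. \<integral>\<^sup>+x. ennreal \<bar>conv \<phi> (dilation g s) x - \<phi> x\<bar> \<partial>lborel) \<longlongrightarrow> 0) (at_right 0)"
    by (rule conv_dilation_tendsto_L1[OF _ g0 g1 \<phi>M' \<phi>i]) simp
qed

lemma riemann_conv_dilation_tendsto_L1: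
  fixes g \<phi> :: "'a::euclidean_space \<Rightarrow> real"
  assumes [measurable]: "g \<in> borel_measurable borel"
    and g0: "\<And>z. g z \<ge> 0" and g1: "(\<integral>\<^sup>+z. ennreal (g z) \<partial>lborel) = 1" and s: "s > 0"
    and \<phi>M: "\<And>y. \<bar>\<phi> y\<bar> \<le> M" and \<phi>Q: "\<And>y. y \<notin> Q \<Longrightarrow> \<phi> y = 0" and Q: "bounded Q"
    and \<phi>i: "integrable lborel \<phi>"
  shows "((\<lambda>d. \<integral>\<^sup>+x. ennreal \<bar>riemann_conv d Q \<phi> (dilation g s) x - conv \<phi> (dilation g s) x\<bar> \<partial>lborel)
           \<longlongrightarrow> 0) (at_right 0)"
proof (rule ennreal_tendsto_0I)
  fix \<eta> :: real assume \<eta>: "\<eta> > 0"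
  have [measurable]: "\<phi> \<in> borel_measurable borel"
    using borel_measurable_integrable[OF \<phi>i] by simp
  define a where "a = (\<integral>x. \<bar>\<phi> x\<bar> \<partial>lborel)"
  have a: "(\<integral>\<^sup>+x. ennreal \<bar>\<phi> x\<bar> \<partial>lborel) = ennreal a" "a \<ge> 0"
    unfolding a_def using \<phi>i by (auto intro!: nn_integral_eq_integral)
  have "integrable lborel g"
    using g0 g1 by (intro integrableI_nonneg) auto
  then obtain \<delta> where \<delta>: "\<delta> > 0"
    "\<And>t. norm t < \<delta> \<Longrightarrow> (\<integral>\<^sup>+w. ennreal \<bar>g (w + t) - g w\<bar> \<partial>lborel) < ennreal (\<eta> / (a + 1))"
    using L1_translation_continuous_uniform[OF integrable_imp_L1_translation_continuous, of g "\<eta> / (a + 1)"]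
      \<eta> a(2) by auto
  show "eventually (\<lambda>d. (\<integral>\<^sup>+x. ennreal \<bar>riemann_conv d Q \<phi> (dilation g s) x
            - conv \<phi> (dilation g s) x\<bar> \<partial>lborel) < ennreal \<eta>) (at_right 0)"
    unfolding eventually_at_right_field
  proof (intro exI[of _ "\<delta> * s / DIM('a)"] conjI allI impI)
    show "0 < \<delta> * s / DIM('a)" using \<delta> s by simp
    fix d :: real assume d: "0 < d" "d < \<delta> * s / DIM('a)"
    have "DIM('a) * d / s < \<delta>" using d s by (simp add: field_simps)
    then have "(\<integral>\<^sup>+x. ennreal \<bar>riemann_conv d Q \<phi> (dilation g s) x - conv \<phi> (dilation g s) x\<bar> \<partial>lborel)
        \<le> ennreal (\<eta> / (a + 1)) * ennreal a"
      using riemann_conv_dilation_L1_error_le[where \<eta>="\<eta> / (a + 1)", OF _ _ g0 _ s d(1) \<phi>M \<phi>Q Q \<phi>i]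
        g1 \<delta>(2) a(1) by (force intro: less_imp_le)
    also have "\<dots> < ennreal \<eta>"
      using \<eta> a(2) by (simp add: ennreal_mult[symmetric] ennreal_less_iff field_simps)
    finally show "(\<integral>\<^sup>+x. ennreal \<bar>riemann_conv d Q \<phi> (dilation g s) x - conv \<phi> (dilation g s) x\<bar> \<partial>lborel)
        < ennreal \<eta>" .
  qed
qed

lemma riemann_conv_dilation_tendsto_Lp:
  fixes g \<phi> :: "'a::euclidean_space \<Rightarrow> real"
  assumes [measurable]: "g \<in> borel_measurable borel"
    and g0: "\<And>z. g z \<ge> 0" and g1: "(\<integral>\<^sup>+z. ennreal (g z) \<partial>lborel) = 1" and gB: "\<And>z. g z \<le> B"
    and s: "s > 0" and \<phi>0: "\<And>y. \<phi> y \<ge> 0" and \<phi>M: "\<And>y. \<phi> y \<le> M"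
    and \<phi>Q: "\<And>y. y \<notin> Q \<Longrightarrow> \<phi> y = 0" and Q: "bounded Q" and \<phi>i: "integrable lborel \<phi>" and p: "p \<ge> 1"
  shows "((\<lambda>d. \<integral>\<^sup>+x. ennreal (\<bar>riemann_conv d Q \<phi> (dilation g s) x - conv \<phi> (dilation g s) x\<bar> powr p)
            \<partial>lborel) \<longlongrightarrow> 0) (at_right 0)"
proof (rule tendsto_nn_integral_abs_powr[OF _ _ p])
  have [measurable]: "\<phi> \<in> borel_measurable borel"
    using borel_measurable_integrable[OF \<phi>i] by simp
  have \<phi>M': "\<bar>\<phi> y\<bar> \<le> M" for y using \<phi>0 \<phi>M by simp
  have gi: "(\<integral>\<^sup>+z. ennreal (g z) \<partial>lborel) < \<infinity>" using g1 by simp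
  show "(\<lambda>x. riemann_conv d Q \<phi> (dilation g s) x - conv \<phi> (dilation g s) x) \<in> borel_measurable lborel" for d
    unfolding riemann_conv_def by simp
  let ?K = "B / s ^ DIM('a) * (\<integral>y. \<phi> y \<partial>lborel)"
  show "eventually (\<lambda>d. \<forall>x. \<bar>riemann_conv d Q \<phi> (dilation g s) x - conv \<phi> (dilation g s) x\<bar> \<le> ?K)
          (at_right 0)"
    using eventually_at_right_less
  proof eventually_elim
    case (elim d)
    show ?case
    proof
      fix x
      have "0 \<le> conv \<phi> (dilation g s) x" "conv \<phi> (dilation g s) x \<le> ?K"
        using conv_dilation_nonneg[of g s \<phi>] conv_dilation_le_sup[OF _ _ g0 gi gB s \<phi>0 \<phi>M' \<phi>i] g0 s \<phi>0
        by auto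
      moreover have "0 \<le> riemann_conv d Q \<phi> (dilation g s) x" "riemann_conv d Q \<phi> (dilation g s) x \<le> ?K"
        using riemann_conv_dilation_bounds[where \<phi>=\<phi>, OF g0 gB s _ \<phi>0 \<phi>Q Q \<phi>i] elim by auto
      ultimately show "\<bar>riemann_conv d Q \<phi> (dilation g s) x - conv \<phi> (dilation g s) x\<bar> \<le> ?K"
        by linarith
    qed
  qed
  show "((\<lambda>d. \<integral>\<^sup>+x. ennreal \<bar>riemann_conv d Q \<phi> (dilation g s) x - conv \<phi> (dilation g s) x\<bar> \<partial>lborel)
           \<longlongrightarrow> 0) (at_right 0)"
    by (rule riemann_conv_dilation_tendsto_L1[OF _ g0 g1 s \<phi>M' \<phi>Q Q \<phi>i]) simp
qed

lemma nn_integral_abs_cmult_powr_le: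
  fixes g :: "'b \<Rightarrow> real"
  assumes [measurable]: "g \<in> borel_measurable M" and g0: "\<And>x. g x \<ge> 0" and gB: "\<And>x. g x \<le> B"
    and g1: "(\<integral>\<^sup>+x. ennreal (g x) \<partial>M) = 1" and c: "0 \<le> c" "c \<le> 1" and p: "p \<ge> 1"
  shows "(\<integral>\<^sup>+x. ennreal (\<bar>c * g x\<bar> powr p) \<partial>M) \<le> ennreal (c * B powr (p - 1))"
proof -
  have "c powr p \<le> c"
    using c p powr_mono'[of 1 p c] by (cases "c = 0") auto
  then have "\<bar>c * g x\<bar> powr p \<le> c * B powr (p - 1) * g x" for x
    using powr_le_powr_minus_one_mult[OF g0 gB p] c g0[of x]
    by (simp add: abs_mult powr_mult mult.assoc mult_mono)
  then have "(\<integral>\<^sup>+x. ennreal (\<bar>c * g x\<bar> powr p) \<partial>M) \<le> (\<integral>\<^sup>+x. ennreal (c * B powr (p - 1)) * ennreal (g x) \<partial>M)"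
    using c g0 by (intro nn_integral_mono) (simp add: ennreal_mult[symmetric] ennreal_leI)
  also have "\<dots> = ennreal (c * B powr (p - 1))"
    using g1 by (simp add: nn_integral_cmult)
  finally show ?thesis .
qed

lemma
  fixes f \<phi> :: "'b \<Rightarrow> real"
  assumes [measurable]: "f \<in> borel_measurable M" "\<phi> \<in> borel_measurable M"
    and \<phi>0: "\<And>x. 0 \<le> \<phi> x" and \<phi>f: "\<And>x. \<phi> x \<le> f x" and f1: "(\<integral>\<^sup>+x. ennreal (f x) \<partial>M) = 1"
  shows integrable_pdf_minorant: "integrable M \<phi>"
    and integral_pdf_minorant_le_1: "(\<integral>x. \<phi> x \<partial>M) \<le> 1"
    and nn_integral_pdf_minus_minorant: "(\<integral>\<^sup>+x. ennreal \<bar>f x - \<phi> x\<bar> \<partial>M) = ennreal (1 - (\<integral>x. \<phi> x \<partial>M))"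
proof -
  have f0: "0 \<le> f x" for x using \<phi>0[of x] \<phi>f[of x] by simp
  have fi: "integrable M f" using f0 f1 by (intro integrableI_nonneg) auto
  show \<phi>i: "integrable M \<phi>"
    using \<phi>0 \<phi>f f0 by (intro Bochner_Integration.integrable_bound[OF fi]) auto
  have "ennreal (\<integral>x. f x \<partial>M) = 1"
    using f1 f0 by (simp add: nn_integral_eq_integral[OF fi, symmetric])
  then have If: "(\<integral>x. f x \<partial>M) = 1"
    using integral_nonneg_AE[of f] f0 by (simp add: ennreal_eq_1)
  show "(\<integral>x. \<phi> x \<partial>M) \<le> 1"
    using integral_mono[OF \<phi>i fi \<phi>f] If by simp
  show "(\<integral>\<^sup>+x. ennreal \<bar>f x - \<phi> x\<bar> \<partial>M) = ennreal (1 - (\<integral>x. \<phi> x \<partial>M))"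
    using nn_integral_eq_integral[of M "\<lambda>x. f x - \<phi> x"] fi \<phi>i \<phi>f If by simp
qed

definition truncation :: "('a::euclidean_space \<Rightarrow> real) \<Rightarrow> nat \<Rightarrow> 'a \<Rightarrow> real" where
  "truncation f k x = min (f x) (real k) * indicator (cball 0 (real k)) x"

lemma measurable_truncation[measurable]:
  assumes [measurable]: "f \<in> borel_measurable borel"
  shows "truncation f k \<in> borel_measurable borel"
proof -
  have [measurable]: "cball (0::'a) (real k) \<in> sets borel" by simp
  show ?thesis unfolding truncation_def by measurable
qed

lemma truncation_bounds:
  assumes "\<And>x. f x \<ge> 0"
  shows "0 \<le> truncation f k x" "truncation f k x \<le> f x" "truncation f k x \<le> real k"
    "x \<notin> cball 0 (real k) \<Longrightarrow> truncation f k x = 0"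
  using assms[of x] by (auto simp: truncation_def indicator_def)

lemma nn_integral_truncation_tendsto:
  fixes f :: "'a::euclidean_space \<Rightarrow> real"
  assumes [measurable]: "f \<in> borel_measurable borel" and f0: "\<And>x. f x \<ge> 0"
    and fp: "(\<integral>\<^sup>+x. ennreal (f x powr p) \<partial>lborel) < \<infinity>" and p: "p \<ge> 0"
  shows "(\<lambda>k. \<integral>\<^sup>+x. ennreal (\<bar>f x - truncation f k x\<bar> powr p) \<partial>lborel) \<longlonglongrightarrow> 0"
proof -
  have "(\<lambda>k. \<integral>\<^sup>+x. ennreal (\<bar>f x - truncation f k x\<bar> powr p) \<partial>lborel)
      \<longlonglongrightarrow> (\<integral>\<^sup>+x. 0 \<partial>(lborel :: 'a measure))"
  proof (rule nn_integral_dominated_convergence[where w="\<lambda>x. ennreal (f x powr p)"])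
    show "AE x in lborel. ennreal (\<bar>f x - truncation f k x\<bar> powr p) \<le> ennreal (f x powr p)" for k
      using truncation_bounds[where f=f and k=k, OF f0] p by (auto intro!: ennreal_leI powr_mono2)
    show "AE x in lborel. (\<lambda>k. ennreal (\<bar>f x - truncation f k x\<bar> powr p)) \<longlonglongrightarrow> 0"
    proof (rule AE_I2)
      fix x
      obtain N :: nat where N: "max (f x) (norm x) < N" using reals_Archimedean2 by blast
      then have "eventually (\<lambda>k. truncation f k x = f x) sequentially"
        unfolding eventually_sequentially
        by (intro exI[of _ N]) (auto simp: truncation_def indicator_def min_def)
      then show "(\<lambda>k. ennreal (\<bar>f x - truncation f k x\<bar> powr p)) \<longlonglongrightarrow> 0"
        by (rule tendsto_eventually[OF eventually_mono]) simp
    qed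
  qed (use fp in auto)
  then show ?thesis by simp
qed

lemma Lp_approx_by_mixtures_borel:
  fixes f g :: "'a::euclidean_space \<Rightarrow> real"
  assumes [measurable]: "f \<in> borel_measurable borel" "g \<in> borel_measurable borel"
    and f0: "\<And>x. f x \<ge> 0" and f1: "(\<integral>\<^sup>+x. ennreal (f x) \<partial>lborel) = 1"
    and fp: "(\<integral>\<^sup>+x. ennreal (f x powr p) \<partial>lborel) < \<infinity>"
    and g0: "\<And>x. g x \<ge> 0" and g1: "(\<integral>\<^sup>+x. ennreal (g x) \<partial>lborel) = 1" and gB: "\<And>x. g x \<le> B"
    and p: "p \<ge> 1" and \<epsilon>: "\<epsilon> > 0"
  shows "eventually (\<lambda>m. \<exists>h\<in>mixtures g m. (\<integral>\<^sup>+x. ennreal (\<bar>f x - h x\<bar> powr p) \<partial>lborel) < ennreal \<epsilon>)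
           sequentially"
proof -
  define \<eta> where "\<eta> = \<epsilon> / (4 powr p * 4)"
  have \<eta>: "\<eta> > 0" unfolding \<eta>_def using \<epsilon> by simp
  define Bp where "Bp = B powr (p - 1)"
  have \<eta>': "\<eta> / (Bp + 1) > 0" using \<eta> by (simp add: Bp_def add_nonneg_pos)
  have f1': "(\<integral>\<^sup>+x. ennreal (f x powr 1) \<partial>lborel) < \<infinity>" using f1 f0 by simp
  obtain k where trunc_err: "(\<integral>\<^sup>+x. ennreal (\<bar>f x - truncation f k x\<bar> powr p) \<partial>lborel) < ennreal \<eta>"
    and k1: "(\<integral>\<^sup>+x. ennreal \<bar>f x - truncation f k x\<bar> \<partial>lborel) < ennreal (\<eta> / (Bp + 1))"
    using eventually_happens'[OF sequentially_bot eventually_conj[OF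
          ennreal_tendsto_0D[OF nn_integral_truncation_tendsto[OF _ f0 fp] \<eta>]
          ennreal_tendsto_0D[OF nn_integral_truncation_tendsto[OF _ f0 f1'] \<eta>']]] p
    by auto
  define \<phi> where "\<phi> = truncation f k"
  define c where "c = 1 - (\<integral>y. \<phi> y \<partial>lborel)"
  have [measurable]: "\<phi> \<in> borel_measurable borel" unfolding \<phi>_def by simp
  have \<phi>0: "\<And>x. 0 \<le> \<phi> x" and \<phi>f: "\<And>x. \<phi> x \<le> f x" and \<phi>k: "\<And>x. \<phi> x \<le> real k"
    and \<phi>Q: "\<And>x. x \<notin> cball 0 (real k) \<Longrightarrow> \<phi> x = 0"
    unfolding \<phi>_def using truncation_bounds[of f, OF f0] by auto
  note \<phi>i = integrable_pdf_minorant[OF _ _ \<phi>0 \<phi>f f1]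
  have c: "0 \<le> c" "c \<le> 1" "c < \<eta> / (Bp + 1)"
    using integral_pdf_minorant_le_1[OF _ _ \<phi>0 \<phi>f f1] integral_nonneg_AE[of \<phi>] \<phi>0 k1 \<eta>'
      nn_integral_pdf_minus_minorant[OF _ _ \<phi>0 \<phi>f f1]
    by (auto simp: c_def \<phi>_def ennreal_less_iff)
  obtain s where s: "s > 0"
    and conv_err: "(\<integral>\<^sup>+x. ennreal (\<bar>\<phi> x - conv \<phi> (dilation g s) x\<bar> powr p) \<partial>lborel) < ennreal \<eta>"
    using eventually_happens'[OF trivial_limit_at_right_real eventually_conj[OF eventually_at_right_less
          ennreal_tendsto_0D[OF conv_dilation_tendsto_Lp[OF _ g0 g1 \<phi>0 \<phi>k \<phi>i p] \<eta>]]]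
    by (auto simp: abs_minus_commute)
  obtain d where d: "d > 0"
    and riemann_err: "(\<integral>\<^sup>+x. ennreal (\<bar>conv \<phi> (dilation g s) x
                         - riemann_conv d (cball 0 k) \<phi> (dilation g s) x\<bar> powr p) \<partial>lborel) < ennreal \<eta>"
    using eventually_happens'[OF trivial_limit_at_right_real eventually_conj[OF eventually_at_right_less
          ennreal_tendsto_0D[OF riemann_conv_dilation_tendsto_Lp[where Q="cball 0 k",
          OF _ g0 g1 gB s \<phi>0 \<phi>k \<phi>Q bounded_cball \<phi>i p] \<eta>]]]
    by (auto simp: abs_minus_commute)
  have "(\<integral>\<^sup>+x. ennreal (\<bar>c * g x\<bar> powr p) \<partial>lborel) \<le> ennreal (c * Bp)"
    unfolding Bp_def by (rule nn_integral_abs_cmult_powr_le[OF _ g0 gB g1 c(1,2) p]) simp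
  also have "\<dots> < ennreal \<eta>"
  proof (rule ennreal_lessI[OF \<eta>])
    have "Bp \<ge> 0" by (simp add: Bp_def)
    then have "c * Bp \<le> c * (Bp + 1)" "c * (Bp + 1) < \<eta>"
      using c by (simp_all add: pos_less_divide_eq distrib_left)
    then show "c * Bp < \<eta>" by linarith
  qed
  finally have leftover_err: "(\<integral>\<^sup>+x. ennreal (\<bar>- c * g x\<bar> powr p) \<partial>lborel) < ennreal \<eta>"
    by simp
  define h where "h x = riemann_conv d (cball 0 k) \<phi> (dilation g s) x + c * dilation g 1 x" for x
  have decomp: "f x - h x = (conv \<phi> (dilation g s) x - riemann_conv d (cball 0 k) \<phi> (dilation g s) x)
      + (\<phi> x - conv \<phi> (dilation g s) x) + - c * g x + (f x - \<phi> x)" for x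
    by (simp add: h_def dilation_def)
  have "(\<integral>\<^sup>+x. ennreal (\<bar>f x - h x\<bar> powr p) \<partial>lborel) < ennreal (4 powr p * (4 * \<eta>))"
    unfolding decomp
    by (rule nn_integral_abs_add4_powr_less[OF _ _ _ _ _ riemann_err conv_err leftover_err])
       (use trunc_err p in \<open>simp_all add: riemann_conv_def \<phi>_def\<close>)
  moreover have "h \<in> mixtures g m" if "m \<ge> card (grid_round d ` cball (0::'a) k) + 1" for m
    unfolding h_def c_def
    by (rule riemann_conv_mixture_in_mixtures[where \<phi>=\<phi> and Q="cball 0 k"])
       (use \<phi>0 \<phi>Q \<phi>i d s that c in \<open>auto simp: c_def\<close>)
  ultimately show ?thesis
    unfolding eventually_sequentially by (auto simp: \<eta>_def)
qed

lemma nonneg_borel_representative: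
  fixes f :: "'a::euclidean_space \<Rightarrow> real"
  assumes "f \<in> borel_measurable lebesgue" "\<And>x. 0 \<le> f x"
  obtains f' where "f' \<in> borel_measurable borel" "\<And>x. 0 \<le> f' x" "AE x in lborel. f x = f' x"
proof -
  obtain f'' where "f'' \<in> borel_measurable lborel" "AE x in lborel. f x = f'' x"
    using completion_ex_borel_measurable_real[OF assms(1)] by blast
  moreover from this(2) have "AE x in lborel. f x = max 0 (f'' x)"
    by eventually_elim (use assms(2) in \<open>metis max.absorb2\<close>)
  ultimately show ?thesis
    using that[of "\<lambda>x. max 0 (f'' x)"] by auto
qed

lemma Lp_approx_by_mixtures:
  fixes f g :: "'a::euclidean_space \<Rightarrow> real"
  assumes f: "is_pdf f" and g: "is_pdf g" and p: "1 \<le> p" and fp: "in_Lp p f" and gB: "in_Linf g"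
  shows "\<exists>h. (\<forall>m\<ge>1. h m \<in> mixtures g m) \<and> (\<lambda>m. Lp_dist_pow p f (h m)) \<longlonglongrightarrow> 0"
proof -
  have f0: "\<And>x. f x \<ge> 0" and g0: "\<And>x. g x \<ge> 0" using f g by (auto simp: is_pdf_def)
  obtain f' where [measurable]: "f' \<in> borel_measurable borel"
    and f'0: "\<And>x. 0 \<le> f' x" and ff': "AE x in lborel. f x = f' x"
    using nonneg_borel_representative[of f] f by (auto simp: is_pdf_def)
  obtain g' where [measurable]: "g' \<in> borel_measurable borel"
    and g'0: "\<And>x. 0 \<le> g' x" and gg': "AE x in lborel. g x = g' x"
    using nonneg_borel_representative[of g] g by (auto simp: is_pdf_def)
  obtain B where "AE x in lebesgue. \<bar>g x\<bar> \<le> B" using gB by (auto simp: in_Linf_def)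
  then have "AE x in lborel. \<bar>g x\<bar> \<le> B" by (simp add: AE_completion_iff)
  with gg' have gg'': "AE x in lborel. g x = min (g' x) (max 0 B)"
    by eventually_elim (use g0 in auto)
  have "(\<integral>\<^sup>+x. ennreal (f' x) \<partial>lborel) = (\<integral>\<^sup>+x. ennreal (f x) \<partial>lebesgue)"
    "(\<integral>\<^sup>+x. ennreal (f' x powr p) \<partial>lborel) = (\<integral>\<^sup>+x. ennreal (\<bar>f x\<bar> powr p) \<partial>lebesgue)"
    "(\<integral>\<^sup>+x. ennreal (min (g' x) (max 0 B)) \<partial>lborel) = (\<integral>\<^sup>+x. ennreal (g x) \<partial>lebesgue)"
    unfolding nn_integral_completion using ff' gg'' f0
    by (auto intro!: nn_integral_cong_AE elim: eventually_mono)
  then have "(\<integral>\<^sup>+x. ennreal (f' x) \<partial>lborel) = 1" "(\<integral>\<^sup>+x. ennreal (f' x powr p) \<partial>lborel) < \<infinity>"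
    "(\<integral>\<^sup>+x. ennreal (min (g' x) (max 0 B)) \<partial>lborel) = 1"
    using f g fp by (auto simp: is_pdf_def in_Lp_def)
  from Lp_approx_by_mixtures_borel[OF _ _ f'0 this(1,2) _ this(3) _ p, of "max 0 B"] g'0
  have approx': "eventually (\<lambda>m. \<exists>h\<in>mixtures (\<lambda>x. min (g' x) (max 0 B)) m.
      (\<integral>\<^sup>+x. ennreal (\<bar>f' x - h x\<bar> powr p) \<partial>lborel) < ennreal e) sequentially" if "e > 0" for e
    using that by auto
  have "eventually (\<lambda>m. \<exists>h\<in>mixtures g m. Lp_dist_pow p f h < ennreal e) sequentially" if "e > 0" for e
    using approx'[OF that]
  proof eventually_elim
    case (elim m)
    then obtain h' where h': "h' \<in> mixtures (\<lambda>x. min (g' x) (max 0 B)) m"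
      "(\<integral>\<^sup>+x. ennreal (\<bar>f' x - h' x\<bar> powr p) \<partial>lborel) < ennreal e"
      by blast
    obtain h where h: "h \<in> mixtures g m" "AE x in lborel. h x = h' x"
      using mixtures_AE_cong[OF gg'' h'(1)] .
    have "Lp_dist_pow p f h = (\<integral>\<^sup>+x. ennreal (\<bar>f' x - h' x\<bar> powr p) \<partial>lborel)"
      unfolding Lp_dist_pow_def nn_integral_completion
      by (rule nn_integral_cong_AE) (use ff' h(2) in \<open>eventually_elim, simp\<close>)
    then show ?case using h(1) h'(2) by (metis (no_types))
  qed
  then show ?thesis
    by (intro approximating_sequence_exists mixtures_nonempty)
qed

section \<open>Uniform approximation on compact sets\<close>

lemma continuous_on_bounded_on_compact:
  fixes f :: "'a::metric_space \<Rightarrow> real"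
  assumes "continuous_on UNIV f" "compact S"
  obtains F where "F \<ge> 0" "\<And>y. y \<in> S \<Longrightarrow> \<bar>f y\<bar> \<le> F"
proof -
  have "bounded (f ` S)"
    using assms by (intro compact_imp_bounded compact_continuous_image) (auto intro: continuous_on_subset)
  then obtain F where "F > 0" "\<And>y. y \<in> S \<Longrightarrow> \<bar>f y\<bar> \<le> F"
    by (auto simp: bounded_pos)
  then show ?thesis using that[of F] by simp
qed

lemma continuous_on_uniformly_continuous_on_compact:
  fixes f :: "'a::metric_space \<Rightarrow> real"
  assumes "continuous_on UNIV f" "compact S" "e > 0"
  obtains \<delta> where "\<delta> > 0" "\<And>x y. x \<in> S \<Longrightarrow> y \<in> S \<Longrightarrow> dist x y < \<delta> \<Longrightarrow> \<bar>f x - f y\<bar> < e"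
proof -
  have "uniformly_continuous_on S f"
    using assms by (intro compact_uniformly_continuous) (auto intro: continuous_on_subset)
  with assms(3) show ?thesis
    using that unfolding uniformly_continuous_on_def dist_real_def by (metis dist_commute)
qed

text \<open>For \<open>x \<in> K\<close> the error is the average of \<open>\<bar>\<phi> (x - s z) - f x\<bar>\<close> against \<open>g z\<close>; it is small where
  \<open>\<bar>z\<bar> \<le> T\<close> by uniform continuity of \<open>f\<close>, and the rest of the mass of \<open>g\<close> is small.\<close>
lemma conv_dilation_uniform_limit:
  fixes f g \<phi> :: "'a::euclidean_space \<Rightarrow> real"
  assumes [measurable]: "g \<in> borel_measurable borel" "\<phi> \<in> borel_measurable borel"
    and g0: "\<And>z. g z \<ge> 0" and g1: "(\<integral>\<^sup>+z. ennreal (g z) \<partial>lborel) = 1"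
    and fc: "continuous_on UNIV f" and K: "K \<subseteq> cball 0 R"
    and \<phi>f: "\<And>y. y \<in> cball 0 (R + 1) \<Longrightarrow> \<phi> y = f y" and \<phi>F: "\<And>y. \<bar>\<phi> y\<bar> \<le> F"
  shows "uniform_limit K (\<lambda>s. conv \<phi> (dilation g s)) f (at_right 0)"
  unfolding uniform_limit_iff
proof (intro allI impI)
  fix \<eta> :: real assume \<eta>: "\<eta> > 0"
  have F: "F \<ge> 0" using \<phi>F[of 0] by simp
  obtain \<tau> where \<tau>: "\<tau> > 0"
    "\<And>x y. x \<in> cball 0 (R + 1) \<Longrightarrow> y \<in> cball 0 (R + 1) \<Longrightarrow> dist x y < \<tau> \<Longrightarrow> \<bar>f x - f y\<bar> < \<eta> / 2"
    using continuous_on_uniformly_continuous_on_compact[OF fc compact_cball[of 0 "R + 1"], of "\<eta> / 2"] \<eta>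
    by auto
  obtain T where T: "T \<ge> 0"
    and tail: "(\<integral>\<^sup>+z. ennreal (g z) * indicator {z. norm z > T} z \<partial>lborel) < ennreal (\<eta> / (2 * (2 * F + 1)))"
    using nn_integral_tail_small[of g "\<eta> / (2 * (2 * F + 1))"] g1 \<eta> F by auto
  have tail': "ennreal (2 * F) * (\<integral>\<^sup>+z. ennreal (g z) * indicator {z. norm z > T} z \<partial>lborel)
      < ennreal (\<eta> / 2)"
  proof -
    have "ennreal (2 * F) * (\<integral>\<^sup>+z. ennreal (g z) * indicator {z. norm z > T} z \<partial>lborel)
        \<le> ennreal (2 * F * (\<eta> / (2 * (2 * F + 1))))"
      using tail F \<eta> by (subst ennreal_mult) (auto intro!: mult_left_mono)
    also have "\<dots> < ennreal (\<eta> / 2)"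
      using F \<eta> by (intro ennreal_lessI) (auto simp: field_simps)
    finally show ?thesis .
  qed
  show "eventually (\<lambda>s. \<forall>x\<in>K. dist (conv \<phi> (dilation g s) x) (f x) < \<eta>) (at_right 0)"
    unfolding eventually_at_right_field
  proof (intro exI[of _ "min \<tau> 1 / (T + 1)"] conjI allI impI ballI)
    show "0 < min \<tau> 1 / (T + 1)" using \<tau> T by simp
    fix s x assume s: "0 < s" "s < min \<tau> 1 / (T + 1)" and x: "x \<in> K"
    have "s * T < min \<tau> 1"
      using s T by (simp add: field_simps)
    have "ennreal \<bar>conv \<phi> (dilation g s) x - f x\<bar> \<le> (\<integral>\<^sup>+z. ennreal (\<bar>\<phi> (x - s *\<^sub>R z) - f x\<bar> * g z) \<partial>lborel)"
      by (rule abs_conv_dilation_minus_le[OF _ _ g0 g1 s(1) \<phi>F]) simp_all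
    also have "\<dots> \<le> (\<integral>\<^sup>+z. ennreal (\<eta> / 2) * ennreal (g z)
                       + ennreal (2 * F) * (ennreal (g z) * indicator {z. norm z > T} z) \<partial>lborel)"
    proof (intro nn_integral_mono)
      fix z :: 'a
      have bound: "\<bar>\<phi> (x - s *\<^sub>R z) - f x\<bar> \<le> (if norm z > T then 2 * F else \<eta> / 2)"
      proof (cases "norm z > T")
        case True
        then show ?thesis
          using \<phi>F[of "x - s *\<^sub>R z"] \<phi>F[of x] \<phi>f[of x] K x by (force simp: abs_le_iff)
      next
        case False
        have "norm (s *\<^sub>R z) \<le> s * T" using s False by (simp add: mult_left_mono)
        with \<open>s * T < min \<tau> 1\<close> have "norm (x - s *\<^sub>R z) \<le> R + 1" "dist (x - s *\<^sub>R z) x < \<tau>"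
          using K x norm_triangle_ineq4[of x "s *\<^sub>R z"] by (auto simp: dist_norm subset_iff)
        then have "x - s *\<^sub>R z \<in> cball 0 (R + 1)" "dist (x - s *\<^sub>R z) x < \<tau>"
          by auto
        then show ?thesis
          using \<tau>(2)[of "x - s *\<^sub>R z" x] \<phi>f K x False by (auto simp: subset_iff less_imp_le)
      qed
      then show "ennreal (\<bar>\<phi> (x - s *\<^sub>R z) - f x\<bar> * g z)
          \<le> ennreal (\<eta> / 2) * ennreal (g z) + ennreal (2 * F) * (ennreal (g z) * indicator {z. norm z > T} z)"
      proof (cases "norm z > T")
        case True
        have "ennreal (\<bar>\<phi> (x - s *\<^sub>R z) - f x\<bar> * g z)
            \<le> ennreal (2 * F) * (ennreal (g z) * indicator {z. norm z > T} z)"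
          using bound True g0[of z] F by (simp add: ennreal_mult[symmetric] ennreal_leI mult_right_mono)
        then show ?thesis by (simp add: add_increasing)
      next
        case False
        have "\<bar>\<phi> (x - s *\<^sub>R z) - f x\<bar> * g z \<le> \<eta> / 2 * g z"
          using bound False g0[of z] by (intro mult_right_mono) auto
        then have "ennreal (\<bar>\<phi> (x - s *\<^sub>R z) - f x\<bar> * g z) \<le> ennreal (\<eta> / 2) * ennreal (g z)"
          using \<eta> g0[of z] by (simp add: ennreal_mult[symmetric] ennreal_leI)
        then show ?thesis by (simp add: add_increasing2)
      qed
    qed
    also have "\<dots> = ennreal (\<eta> / 2) + ennreal (2 * F) * (\<integral>\<^sup>+z. ennreal (g z) * indicator {z. norm z > T} z \<partial>lborel)"
      using g1 by (subst nn_integral_add) (auto simp: nn_integral_cmult)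
    also have "\<dots> < ennreal (\<eta> / 2) + ennreal (\<eta> / 2)"
      using tail' by (simp add: ennreal_add_left_cancel_less)
    finally show "dist (conv \<phi> (dilation g s) x) (f x) < \<eta>"
      using \<eta> by (simp add: dist_real_def ennreal_plus[symmetric] ennreal_less_iff del: ennreal_plus)
  qed
qed

text \<open>For \<open>x \<in> K\<close> and \<open>y \<in> Q\<close>, both \<open>(x - y) / s\<close> and \<open>(x - grid_round d y) / s\<close> stay in a fixed compact
  ball, on which \<open>g\<close> is uniformly continuous.\<close>
lemma riemann_conv_dilation_uniform_limit:
  fixes g \<phi> :: "'a::euclidean_space \<Rightarrow> real"
  assumes [measurable]: "g \<in> borel_measurable borel" "\<phi> \<in> borel_measurable borel"
    and gc: "continuous_on UNIV g" and g0: "\<And>z. g z \<ge> 0" and gi: "(\<integral>\<^sup>+z. ennreal (g z) \<partial>lborel) < \<infinity>"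
    and s: "s > 0" and \<phi>M: "\<And>y. \<bar>\<phi> y\<bar> \<le> M" and \<phi>Q: "\<And>y. y \<notin> Q \<Longrightarrow> \<phi> y = 0" and Q: "bounded Q"
    and \<phi>i: "integrable lborel \<phi>" and K: "bounded K"
  shows "uniform_limit K (\<lambda>d. riemann_conv d Q \<phi> (dilation g s)) (conv \<phi> (dilation g s)) (at_right 0)"
  unfolding uniform_limit_iff
proof (intro allI impI)
  fix \<eta> :: real assume \<eta>: "\<eta> > 0"
  define a where "a = (\<integral>x. \<bar>\<phi> x\<bar> \<partial>lborel)"
  have a: "(\<integral>\<^sup>+x. ennreal \<bar>\<phi> x\<bar> \<partial>lborel) = ennreal a" "a \<ge> 0"
    unfolding a_def using \<phi>i by (auto intro!: nn_integral_eq_integral)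
  obtain RK RQ where RK: "\<And>x. x \<in> K \<Longrightarrow> norm x \<le> RK" and RQ: "\<And>y. y \<in> Q \<Longrightarrow> norm y \<le> RQ"
    using K Q by (auto simp: bounded_iff)
  define C where "C = cball (0::'a) ((RK + RQ + 1) / s)"
  obtain \<rho> where \<rho>: "\<rho> > 0"
    "\<And>u v. u \<in> C \<Longrightarrow> v \<in> C \<Longrightarrow> dist u v < \<rho> \<Longrightarrow> \<bar>g u - g v\<bar> < \<eta> / (a + 1) * s ^ DIM('a)"
    using continuous_on_uniformly_continuous_on_compact[OF gc compact_cball[of 0 "(RK + RQ + 1) / s"],
        of "\<eta> / (a + 1) * s ^ DIM('a)"] \<eta> a(2) s
    unfolding C_def by auto
  show "eventually (\<lambda>d. \<forall>x\<in>K. dist (riemann_conv d Q \<phi> (dilation g s) x) (conv \<phi> (dilation g s) x) < \<eta>)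
          (at_right 0)"
    unfolding eventually_at_right_field
  proof (intro exI[of _ "min 1 (\<rho> * s) / DIM('a)"] conjI allI impI ballI)
    show "0 < min 1 (\<rho> * s) / DIM('a)" using \<rho> s by simp
    fix d x assume d: "0 < d" "d < min 1 (\<rho> * s) / DIM('a)" and x: "x \<in> K"
    have "DIM('a) * d < min 1 (\<rho> * s)" using d by (simp add: field_simps)
    have cell: "\<bar>dilation g s (x - grid_round d y) - dilation g s (x - y)\<bar> \<le> \<eta> / (a + 1)" if y: "y \<in> Q" for y
    proof -
      have grid: "norm (y - grid_round d y) \<le> DIM('a) * d"
        by (rule norm_diff_grid_round_le[OF d(1)])
      have "norm (x - grid_round d y) \<le> norm (x - y) + norm (y - grid_round d y)"
        by (metis diff_add_cancel norm_triangle_ineq add_diff_eq diff_diff_eq2)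
      then have "(x - grid_round d y) /\<^sub>R s \<in> C" "(x - y) /\<^sub>R s \<in> C"
        using grid \<open>DIM('a) * d < min 1 (\<rho> * s)\<close> RK[OF x] RQ[OF y] norm_triangle_ineq4[of x y] s
        by (auto simp: C_def divide_simps)
      moreover have "dist ((x - grid_round d y) /\<^sub>R s) ((x - y) /\<^sub>R s) < \<rho>"
        using grid \<open>DIM('a) * d < min 1 (\<rho> * s)\<close> s
        by (simp add: dist_norm algebra_simps divide_simps flip: scaleR_diff_right)
      ultimately show ?thesis
        using \<rho>(2) s by (simp add: dilation_def diff_divide_distrib[symmetric] abs_divide pos_divide_le_eq less_imp_le)
    qed
    have "ennreal \<bar>riemann_conv d Q \<phi> (dilation g s) x - conv \<phi> (dilation g s) x\<bar>
        \<le> (\<integral>\<^sup>+y. ennreal (\<bar>\<phi> y\<bar> * \<bar>dilation g s (x - grid_round d y) - dilation g s (x - y)\<bar>) \<partial>lborel)"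
      by (intro riemann_conv_error_le[where \<phi>=\<phi>, OF Q d(1) \<phi>Q \<phi>i]
          integrable_bounded_mult_dilation[OF _ _ g0 gi s \<phi>M]) simp_all
    also have "\<dots> \<le> (\<integral>\<^sup>+y. ennreal \<bar>\<phi> y\<bar> * ennreal (\<eta> / (a + 1)) \<partial>lborel)"
    proof (intro nn_integral_mono)
      fix y
      have "\<bar>\<phi> y\<bar> * \<bar>dilation g s (x - grid_round d y) - dilation g s (x - y)\<bar> \<le> \<bar>\<phi> y\<bar> * (\<eta> / (a + 1))"
        using cell[of y] \<phi>Q[of y] by (cases "y \<in> Q") (auto intro!: mult_left_mono simp del: times_divide_eq_right)
      then show "ennreal (\<bar>\<phi> y\<bar> * \<bar>dilation g s (x - grid_round d y) - dilation g s (x - y)\<bar>)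
          \<le> ennreal \<bar>\<phi> y\<bar> * ennreal (\<eta> / (a + 1))"
        using \<eta> a(2) by (simp add: ennreal_mult[symmetric] ennreal_leI)
    qed
    also have "\<dots> = ennreal (a * (\<eta> / (a + 1)))"
      using a \<eta> by (subst nn_integral_multc) (simp_all add: ennreal_mult del: times_divide_eq_right)
    also have "\<dots> < ennreal \<eta>"
      using a(2) \<eta> by (intro ennreal_lessI) (auto simp: field_simps)
    finally show "dist (riemann_conv d Q \<phi> (dilation g s) x) (conv \<phi> (dilation g s) x) < \<eta>"
      using \<eta> by (simp add: dist_real_def ennreal_less_iff)
  qed
qed

lemma dilation_uniform_limit_at_top:
  fixes g :: "'a::euclidean_space \<Rightarrow> real"
  assumes gc: "continuous_on UNIV g" and K: "bounded K"
  shows "uniform_limit K (dilation g) (\<lambda>_. 0) at_top"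
  unfolding uniform_limit_iff
proof (intro allI impI)
  fix \<eta> :: real assume \<eta>: "\<eta> > 0"
  obtain G where G: "G \<ge> 0" "\<And>y. y \<in> cball 0 1 \<Longrightarrow> \<bar>g y\<bar> \<le> G"
    using continuous_on_bounded_on_compact[OF gc compact_cball] by blast
  obtain R where R: "\<And>x. x \<in> K \<Longrightarrow> norm x \<le> R" using K by (auto simp: bounded_iff)
  show "eventually (\<lambda>S. \<forall>x\<in>K. dist (dilation g S x) 0 < \<eta>) at_top"
    unfolding eventually_at_top_linorder
  proof (intro exI[of _ "max 1 (max R ((G + 1) / \<eta>))"] allI impI ballI)
    fix S x assume S: "max 1 (max R ((G + 1) / \<eta>)) \<le> S" and x: "x \<in> K"
    have "x /\<^sub>R S \<in> cball 0 1"
      using R[OF x] S by (simp add: divide_simps)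
    then have "\<bar>dilation g S x\<bar> \<le> G / S ^ DIM('a)"
      using G S by (simp add: dilation_def abs_divide divide_right_mono)
    also have "\<dots> \<le> G / S"
      using G S DIM_positive[where 'a='a] by (intro divide_left_mono) (auto intro: power_increasing[of 1 _ S, simplified])
    also have "\<dots> < \<eta>"
      using S \<eta> by (simp add: divide_simps) (simp add: mult.commute)
    finally show "dist (dilation g S x) 0 < \<eta>" by simp
  qed
qed

lemma uniform_approx_by_mixtures_continuous:
  fixes f g :: "'a::euclidean_space \<Rightarrow> real" and K :: "'a set"
  assumes fc: "continuous_on UNIV f" and gc: "continuous_on UNIV g"
    and f0: "\<And>x. f x \<ge> 0" and f1: "(\<integral>\<^sup>+x. ennreal (f x) \<partial>lborel) = 1"
    and g0: "\<And>x. g x \<ge> 0" and g1: "(\<integral>\<^sup>+x. ennreal (g x) \<partial>lborel) = 1"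
    and K: "compact K" and \<epsilon>: "\<epsilon> > 0"
  shows "eventually (\<lambda>m. \<exists>h\<in>mixtures g m. \<forall>x\<in>K. \<bar>f x - h x\<bar> < \<epsilon>) sequentially"
proof -
  have [measurable]: "f \<in> borel_measurable borel" "g \<in> borel_measurable borel"
    using fc gc by (auto intro: borel_measurable_continuous_onI)
  have gi: "(\<integral>\<^sup>+z. ennreal (g z) \<partial>lborel) < \<infinity>" using g1 by simp
  have \<epsilon>3: "\<epsilon> / 3 > 0" using \<epsilon> by simp
  obtain R where R: "K \<subseteq> cball 0 R"
    using compact_imp_bounded[OF K] by (auto simp: bounded_iff subset_iff)
  define Q where "Q = cball (0::'a) (R + 1)"
  obtain F where F: "F \<ge> 0" "\<And>y. y \<in> Q \<Longrightarrow> \<bar>f y\<bar> \<le> F"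
    using continuous_on_bounded_on_compact[OF fc compact_cball] unfolding Q_def by blast
  define \<phi> where "\<phi> y = f y * indicator Q y" for y
  have [measurable]: "Q \<in> sets borel" unfolding Q_def by simp
  have [measurable]: "\<phi> \<in> borel_measurable borel" unfolding \<phi>_def[abs_def] by measurable
  have \<phi>0: "\<And>y. \<phi> y \<ge> 0" and \<phi>f: "\<And>y. \<phi> y \<le> f y" and \<phi>F: "\<And>y. \<bar>\<phi> y\<bar> \<le> F"
    and \<phi>Q: "\<And>y. y \<notin> Q \<Longrightarrow> \<phi> y = 0" and \<phi>_eq: "\<And>y. y \<in> Q \<Longrightarrow> \<phi> y = f y"
    using f0 F by (auto simp: \<phi>_def indicator_def)
  note \<phi>i = integrable_pdf_minorant[OF _ _ \<phi>0 \<phi>f f1]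
  define c where "c = 1 - (\<integral>y. \<phi> y \<partial>lborel)"
  have c: "0 \<le> c" "c \<le> 1"
    using integral_pdf_minorant_le_1[OF _ _ \<phi>0 \<phi>f f1] integral_nonneg_AE[of \<phi>] \<phi>0
    by (auto simp: c_def)
  obtain s where s: "s > 0" and conv_err: "\<And>x. x \<in> K \<Longrightarrow> \<bar>conv \<phi> (dilation g s) x - f x\<bar> < \<epsilon> / 3"
    using eventually_happens'[OF trivial_limit_at_right_real eventually_conj[OF eventually_at_right_less
          uniform_limitD[OF conv_dilation_uniform_limit[OF _ _ g0 g1 fc R \<phi>_eq[unfolded Q_def] \<phi>F] \<epsilon>3]]]
    by (auto simp: dist_real_def)
  obtain d where d: "d > 0"
    and riemann_err: "\<And>x. x \<in> K \<Longrightarrow> \<bar>riemann_conv d Q \<phi> (dilation g s) x - conv \<phi> (dilation g s) x\<bar> < \<epsilon> / 3"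
    using eventually_happens'[OF trivial_limit_at_right_real eventually_conj[OF eventually_at_right_less
          uniform_limitD[OF riemann_conv_dilation_uniform_limit[where \<phi>=\<phi> and Q=Q, OF _ _ gc g0 gi s \<phi>F \<phi>Q _ \<phi>i
            compact_imp_bounded[OF K]] \<epsilon>3]]]
    by (auto simp: dist_real_def Q_def)
  obtain S where S: "S > 0" and leftover_err: "\<And>x. x \<in> K \<Longrightarrow> \<bar>dilation g S x\<bar> < \<epsilon> / 3"
    using eventually_happens'[OF trivial_limit_at_top_linorder eventually_conj[OF eventually_gt_at_top[of 0]
          uniform_limitD[OF dilation_uniform_limit_at_top[OF gc compact_imp_bounded[OF K]] \<epsilon>3]]]
    by auto
  define h where "h x = riemann_conv d Q \<phi> (dilation g s) x + c * dilation g S x" for x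
  have "\<bar>f x - h x\<bar> < \<epsilon>" if x: "x \<in> K" for x
  proof -
    have "\<bar>c * dilation g S x\<bar> \<le> \<bar>dilation g S x\<bar>"
      using c by (simp add: abs_mult mult_left_le_one_le)
    then show ?thesis
      using conv_err[OF x] riemann_err[OF x] leftover_err[OF x] unfolding h_def by linarith
  qed
  moreover have "h \<in> mixtures g m" if "m \<ge> card (grid_round d ` Q) + 1" for m
    unfolding h_def c_def
    by (rule riemann_conv_mixture_in_mixtures[where \<phi>=\<phi> and Q=Q])
       (use \<phi>0 \<phi>Q \<phi>i d s S that c in \<open>auto simp: Q_def c_def\<close>)
  ultimately show ?thesis
    unfolding eventually_sequentially by auto
qed

lemma uniform_approx_by_mixtures:
  fixes f g :: "'a::euclidean_space \<Rightarrow> real" and K :: "'a set"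
  assumes f: "is_pdf f" and g: "is_pdf g" and fc: "continuous_on UNIV f" and gc: "continuous_on UNIV g"
    and K: "compact K"
  shows "\<exists>h. (\<forall>m\<ge>1. h m \<in> mixtures g m) \<and> (\<lambda>m. SUP x\<in>K. ennreal \<bar>f x - h m x\<bar>) \<longlonglongrightarrow> 0"
proof (rule approximating_sequence_exists[OF mixtures_nonempty])
  fix e :: real assume e: "e > 0"
  have "(\<integral>\<^sup>+x. ennreal (f x) \<partial>lborel) = 1" "(\<integral>\<^sup>+x. ennreal (g x) \<partial>lborel) = 1"
    using f g by (auto simp: is_pdf_def nn_integral_completion)
  with f g have "eventually (\<lambda>m. \<exists>h\<in>mixtures g m. \<forall>x\<in>K. \<bar>f x - h x\<bar> < e / 2) sequentially"
    using e by (intro uniform_approx_by_mixtures_continuous[OF fc gc _ _ _ _ K]) (auto simp: is_pdf_def)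
  then show "eventually (\<lambda>m. \<exists>h\<in>mixtures g m. (SUP x\<in>K. ennreal \<bar>f x - h x\<bar>) < ennreal e) sequentially"
  proof eventually_elim
    case (elim m)
    then obtain h where h: "h \<in> mixtures g m" "\<And>x. x \<in> K \<Longrightarrow> \<bar>f x - h x\<bar> < e / 2" by blast
    have "(SUP x\<in>K. ennreal \<bar>f x - h x\<bar>) \<le> ennreal (e / 2)"
      using h(2) by (intro SUP_least ennreal_leI less_imp_le)
    also have "\<dots> < ennreal e" using e by (intro ennreal_lessI) auto
    finally show ?case using h(1) by blast
  qed
qed

theorem theorem2:
  fixes f g :: "'a::euclidean_space \<Rightarrow> real"
  assumes "is_pdf f" and "is_pdf g"
  shows "(\<forall>K::'a set. continuous_on UNIV f \<and> continuous_on UNIV g \<and> compact K \<longrightarrow>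
            (\<exists>h::nat \<Rightarrow> 'a \<Rightarrow> real. (\<forall>m\<ge>1. h m \<in> mixtures g m) \<and>
               (\<lambda>m. SUP x\<in>K. ennreal \<bar>f x - h m x\<bar>) \<longlonglongrightarrow> 0))
       \<and> (\<forall>p::real. 1 \<le> p \<and> in_Lp p f \<and> in_Linf g \<longrightarrow>
            (\<exists>h::nat \<Rightarrow> 'a \<Rightarrow> real. (\<forall>m\<ge>1. h m \<in> mixtures g m) \<and>
               (\<lambda>m. Lp_dist_pow p f (h m)) \<longlonglongrightarrow> 0))"
  using uniform_approx_by_mixtures[OF assms] Lp_approx_by_mixtures[OF assms] by blast

end
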